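(* Let $\Pi$ be a proof structure with hypotheses $A_1,\ldots,A_n$ (labelled by strings $\alpha_1,\ldots,\alpha_n$) and conclusion $C$, whose abstract proof structure contracts, by a finite sequence $\rho$ of the contractions in the context, to a single comb with conclusion $C$ whose premiss sequence, read as a string, is $\gamma$. Then there is a natural deduction proof of $\alpha_1:A_1,\ldots,\alpha_n:A_n\vdash\gamma:C$ in the Displacement calculus.
   Context: Strings. String terms are built from a countably infinite set of variables (each of sort $0$) and a separator constant $\mathbf{1}$ by an associative concatenation $+$ (with empty string $\epsilon$). The sort of a string term is its number of occurrences of $\mathbf{1}$. For $k\in\{>,<\}\cup\{1,2,3,\ldots\}$ and strings $\alpha$ (of sort $\geq 1$, resp. $\geq k$ if $k$ is an integer) and $\beta$: write $\alpha=\alpha'+\mathbf{1}+\alpha''$ where the displayed $\mathbf{1}$ is the first occurrence of $\mathbf{1}$ if $k={>}$, the last one if $k={<}$, and the $k$-th one if $k$ is an integer; then $\alpha\times_k\beta=\alpha'+\beta+\alpha''$. Formulas. Atomic formulas have fixed sorts. Complex formulas are $A\bullet B$, $A\backslash C$, $C/B$, $A\odot_k B$, $A\downarrow_k C$, $C\uparrow_k B$ with sorts $s(A\bullet B)=s(A)+s(B)$, $s(A\backslash C)=s(C)-s(A)$, $s(C/B)=s(C)-s(B)$, $s(A\odot_k B)=s(A)+s(B)-1$, $s(A\downarrow_k C)=s(C)+1-s(A)$, $s(C\uparrow_k B)=s(C)+1-s(B)$; a formula is well formed only when all these sorts are $\geq 0$ and the wrap operations required below are defined. Natural deduction. Judgements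 are $\alpha:A$ with $\alpha$ a string of sort $s(A)$. Hypotheses (and withdrawn hypotheses) of sort $m$ are labelled $p_0+\mathbf{1}+\cdots+\mathbf{1}+p_m$ with fresh distinct variables $p_i$. Rules: $\backslash E$: from $\alpha:A$ and $\gamma:A\backslash C$ infer $\alpha+\gamma:C$; $\backslash I$: from a derivation of $\alpha+\gamma:C$ with hypothesis $\alpha:A$, withdraw it and infer $\gamma:A\backslash C$; $/E$: from $\gamma:C/B$ and $\beta:B$ infer $\gamma+\beta:C$; $/I$: from a derivation of $\gamma+\beta:C$ withdraw $\beta:B$, infer $\gamma:C/B$; $\bullet I$: from $\alpha:A,\beta:B$ infer $\alpha+\beta:A\bullet B$; $\bullet E$: from $\delta:A\bullet B$ and a derivation of $\gamma[\alpha+\beta]:C$ from hypotheses $\alpha:A,\beta:B$, withdraw these and infer $\gamma[\delta]:C$; $\downarrow_k E$: from $\alpha:A$ and $\gamma:A\downarrow_k C$ infer $\alpha\times_k\gamma:C$; $\downarrow_k I$: from a derivation of $\alpha\times_k\gamma:C$ withdraw $\alpha:A$, infer $\gamma:A\downarrow_k C$; $\uparrow_k E$: from $\gamma:C\uparrow_k B$ and $\beta:B$ infer $\gamma\times_k\beta:C$; $\uparrow_k I$: from a derivation of $\gamma\times_k\beta:C$ withdraw $\beta:B$, infer $\gamma:C\uparrow_k B$; $\odot_k I$: from $\alpha:A,\beta:B$ infer $\alpha\times_k\beta:A\odot_k B$; $\odot_k E$: from $\delta:A\odot_k B$ and a derivation of $\gamma[\alpha\times_k\beta]:C$ from $\alpha:A,\beta:B$,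 withdraw these and infer $\gamma[\delta]:C$. Links. A link joins an ordered list of premiss formulas and an ordered list of conclusion formulas. Tensor links: $[L/]$ premisses $C/B,B$, conclusion $C$, label $+$; $[L\backslash]$ premisses $A,A\backslash C$, conclusion $C$, label $+$; $[R\bullet]$ premisses $A,B$, conclusion $A\bullet B$, label $+$; $[L\uparrow_k]$ premisses $C\uparrow_k B,B$, conclusion $C$, label $\times_k$; $[L\downarrow_k]$ premisses $A, A\downarrow_k C$, conclusion $C$, label $\times_k$; $[R\odot_k]$ premisses $A,B$, conclusion $A\odot_k B$, label $\times_k$. Par links (one formula is marked as main): $[L\bullet]$ premiss $A\bullet B$ (main), conclusions $A,B$; $[L\odot_k]$ premiss $A\odot_k B$ (main), conclusions $A,B$; $[R/]$ premiss $C$, conclusions $C/B$ (main), $B$; $[R\backslash]$ premiss $C$, conclusions $A$, $A\backslash C$ (main); $[R\uparrow_k]$ premiss $C$, conclusions $C\uparrow_k B$ (main), $B$; $[R\downarrow_k]$ premiss $C$, conclusions $A$, $A\downarrow_k C$ (main). A proof structure is a set of formula occurrences and links instantiating these schemes such that each formula is premiss of at most one link and conclusion of at most one link. Its hypotheses are formulas that are conclusion of no link; its conclusions are formulas that are premiss of no link. Its auxiliary inputs are the non-main conclusions of par links (both conclusions for $[L\bullet]$, $[L\odot_k]$). Combs and abstract proof structures. A comb is a link with an ordered (possibly empty) list of premisses and one conclusion distinct from them; premisses are vertices or occurrences of the constant $\mathbf{1}$ (sort 1); the sort of a comb is the sum of the sorts of its premisses. The abstract proof structure of a proof structure is obtained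 by: replacing each $+$-labelled tensor link with premisses $v_1,v_2$ and conclusion $v_3$ by a comb with premisses $v_1,v_2$ and conclusion $v_3$; replacing each hypothesis $A_i$ of sort $m$ by an unlabelled vertex that is the conclusion of a comb with premisses $p_0,\mathbf{1},p_1,\ldots,\mathbf{1},p_m$ where $\alpha_i=p_0+\mathbf{1}+\cdots+\mathbf{1}+p_m$ with fresh distinct sort-0 variables $p_j$; replacing each auxiliary input $A$ of sort $m$ by an unlabelled vertex that is the conclusion of a comb with premisses $v_0,\mathbf{1},v_1,\ldots,\mathbf{1},v_m$, where $v_0,\ldots,v_m$ are fresh sort-0 vertices and the par link is connected to all of $v_0,\ldots,v_m$ instead of $A$ (the expansion of that auxiliary input); keeping the label of the conclusion of the structure and making all other vertices unlabelled (each keeping the sort of its formula). Contractions (sequences $\alpha_1,\alpha_2,\beta,\gamma_1,\gamma_2$ of comb premisses may be empty). $[+]$: a comb with premisses $\alpha_1,w,\alpha_2$ and conclusion $v$, where $w$ is the conclusion of a comb with premisses $\beta$, becomes one comb with premisses $\alpha_1,\beta,\alpha_2$ and conclusion $v$. $[\times_k]$: a $\times_k$ tensor link with conclusion $v$ whose first premiss is the conclusion of a comb with premisses $\alpha_1,\mathbf{1},\alpha_2$ and whose second premiss is the conclusion of a comb with premisses $\beta$ becomes a comb with premisses $\alpha_1,\beta,\alpha_2$ and conclusion $v$, where the displayed $\mathbf{1}$ is the one selected by $k$ ($\alpha_1$ of sort $0$ if $k={>}$, $\alpha_2$ of sort 0 if $k={<}$, $\alpha_1$ of sort $k-1$ if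 $k$ is an integer). In the logical contractions, a par link with main vertex $v$ (or premiss $v_1$ for $\bullet,\odot_k$) is removed together with its connections; $e_A, e_B$ denote the expansions of its auxiliary inputs. $[\backslash]$: par $[R\backslash]$ whose premiss is the conclusion of a comb with premisses $e_A,\beta$: result comb $\beta$ with conclusion $v$. $[/]$: symmetric with comb premisses $\beta,e_B$. $[\uparrow_k]$: par $[R\uparrow_k]$ whose premiss is the conclusion of a comb with premisses $\alpha_1,e_B,\alpha_2$: result comb $\alpha_1,\mathbf{1},\alpha_2$ with conclusion $v$, with the same sort restriction on $\alpha_1,\alpha_2$ as for $[\times_k]$. $[\downarrow_k]$: par $[R\downarrow_k]$ whose premiss is the conclusion of a comb with premisses $e',\beta,e''$ where $e_A=e',\mathbf{1},e''$ with the displayed $\mathbf{1}$ selected by $k$: result comb $\beta$ with conclusion $v$. $[\bullet]$: par $[L\bullet]$ with premiss $v_1$ and a comb with premisses $\gamma_1,e_A,e_B,\gamma_2$ and conclusion $v_2$: result comb $\gamma_1,v_1,\gamma_2$ with conclusion $v_2$. $[\odot_k]$: par $[L\odot_k]$ with premiss $v_1$, $e_A=e',\mathbf{1},e''$ with the $\mathbf{1}$ selected by $k$, and a comb with premisses $\gamma_1,e',e_B,e'',\gamma_2$ and conclusion $v_2$: result comb $\gamma_1,v_1,\gamma_2$ with conclusion $v_2$. *)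

theory Defs
  imports Main "HOL-Library.Multiset"
begin

datatype sym = SVar nat | Sep   (* variables (sort 0) and the separator constant 1 *)

type_synonym str = "sym list"   (* concatenation = append, empty string = [] *)

definition ssort :: "str \<Rightarrow> nat" where
  "ssort \<alpha> = length (filter (\<lambda>x. x = Sep) \<alpha>)"

definition svars :: "str \<Rightarrow> nat list" where
  "svars \<alpha> = [p. SVar p \<leftarrow> \<alpha>]"

text \<open>Wrap indices: > (first separator), < (last separator), or an integer k >= 1.\<close>
datatype wk = WFirst | WLast | WNth nat

definition sep_positions :: "str \<Rightarrow> nat list" where
  "sep_positions \<alpha> = filter (\<lambda>i. \<alpha> ! i = Sep) [0..<length \<alpha>]"

definition selsep :: "wk \<Rightarrow> str \<Rightarrow> nat option" where
  "selsep k \<alpha> = (let ps = sep_positions \<alpha> in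
     (case k of
        WFirst \<Rightarrow> (if ps = [] then None else Some (hd ps))
      | WLast \<Rightarrow> (if ps = [] then None else Some (last ps))
      | WNth n \<Rightarrow> (if 1 \<le> n \<and> n \<le> length ps then Some (ps ! (n - 1)) else None)))"

definition wrap_defined :: "wk \<Rightarrow> str \<Rightarrow> bool" where
  "wrap_defined k \<alpha> \<longleftrightarrow> selsep k \<alpha> \<noteq> None"

text \<open>alpha \<times>_k beta (meaningful only when wrap_defined k alpha).\<close>
definition swrap :: "wk \<Rightarrow> str \<Rightarrow> str \<Rightarrow> str" where
  "swrap k \<alpha> \<beta> = (case selsep k \<alpha> of
      Some i \<Rightarrow> take i \<alpha> @ \<beta> @ drop (Suc i) \<alpha>
    | None \<Rightarrow> \<alpha> @ \<beta>)"

fun hlabel :: "nat list \<Rightarrow> str" where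
  "hlabel [] = []"
| "hlabel [p] = [SVar p]"
| "hlabel (p # ps) = SVar p # Sep # hlabel ps"

definition is_hyp_label :: "str \<Rightarrow> nat \<Rightarrow> bool" where
  "is_hyp_label \<alpha> m \<longleftrightarrow> (\<exists>ps. length ps = Suc m \<and> distinct ps \<and> \<alpha> = hlabel ps)"

datatype formula =
    DAt nat nat                    (* atom: name, sort *)
  | DProd formula formula
  | DUnder formula formula         (* A \ C *)
  | DOver formula formula          (* C / B *)
  | DWrap wk formula formula       (* A \<odot>_k B *)
  | DDown wk formula formula       (* A \<down>_k C *)
  | DUp wk formula formula         (* C \<up>_k B *)

fun fsort :: "formula \<Rightarrow> nat" where
  "fsort (DAt _ s) = s"
| "fsort (DProd A B) = fsort A + fsort B"
| "fsort (DUnder A C) = fsort C - fsort A"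
| "fsort (DOver C B) = fsort C - fsort B"
| "fsort (DWrap k A B) = fsort A + fsort B - 1"
| "fsort (DDown k A C) = fsort C + 1 - fsort A"
| "fsort (DUp k C B) = fsort C + 1 - fsort B"

text \<open>A string of sort s can be wrapped with index k.\<close>
definition wrap_sort_ok :: "wk \<Rightarrow> nat \<Rightarrow> bool" where
  "wrap_sort_ok k s = (case k of WFirst \<Rightarrow> 1 \<le> s | WLast \<Rightarrow> 1 \<le> s
                                | WNth n \<Rightarrow> 1 \<le> n \<and> n \<le> s)"

fun wf :: "formula \<Rightarrow> bool" where
  "wf (DAt _ _) = True"
| "wf (DProd A B) = (wf A \<and> wf B)"
| "wf (DUnder A C) = (wf A \<and> wf C \<and> fsort A \<le> fsort C)"
| "wf (DOver C B) = (wf C \<and> wf B \<and> fsort B \<le> fsort C)"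
| "wf (DWrap k A B) = (wf A \<and> wf B \<and> wrap_sort_ok k (fsort A))"
| "wf (DDown k A C) = (wf A \<and> wf C \<and> fsort A \<le> fsort C + 1 \<and> wrap_sort_ok k (fsort A))"
| "wf (DUp k C B) = (wf C \<and> wf B \<and> fsort B \<le> fsort C + 1
                      \<and> wrap_sort_ok k (fsort C + 1 - fsort B))"

type_synonym judg = "str \<times> formula"

definition cvars :: "judg multiset \<Rightarrow> nat set" where
  "cvars \<Gamma> = (\<Union>j\<in>set_mset \<Gamma>. set (svars (fst j)))"

text \<open>ND \<Gamma> (\<gamma>, C): there is a natural deduction derivation of \<gamma> : C whose open
  (non-withdrawn) hypotheses are exactly the multiset \<Gamma>. Hypotheses (also withdrawn
  ones) carry labels with fresh distinct variables.\<close>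
inductive ND :: "judg multiset \<Rightarrow> judg \<Rightarrow> bool" where
  hyp: "is_hyp_label \<alpha> (fsort A) \<Longrightarrow> wf A \<Longrightarrow> ND {#(\<alpha>, A)#} (\<alpha>, A)"
| underE: "ND \<Gamma> (\<alpha>, A) \<Longrightarrow> ND \<Delta> (\<gamma>, DUnder A C) \<Longrightarrow> cvars \<Gamma> \<inter> cvars \<Delta> = {}
     \<Longrightarrow> ND (\<Gamma> + \<Delta>) (\<alpha> @ \<gamma>, C)"
| underI: "ND (add_mset (\<alpha>, A) \<Gamma>) (\<alpha> @ \<gamma>, C) \<Longrightarrow> is_hyp_label \<alpha> (fsort A)
     \<Longrightarrow> set (svars \<alpha>) \<inter> cvars \<Gamma> = {} \<Longrightarrow> wf (DUnder A C)
     \<Longrightarrow> ND \<Gamma> (\<gamma>, DUnder A C)"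
| overE: "ND \<Gamma> (\<gamma>, DOver C B) \<Longrightarrow> ND \<Delta> (\<beta>, B) \<Longrightarrow> cvars \<Gamma> \<inter> cvars \<Delta> = {}
     \<Longrightarrow> ND (\<Gamma> + \<Delta>) (\<gamma> @ \<beta>, C)"
| overI: "ND (add_mset (\<beta>, B) \<Gamma>) (\<gamma> @ \<beta>, C) \<Longrightarrow> is_hyp_label \<beta> (fsort B)
     \<Longrightarrow> set (svars \<beta>) \<inter> cvars \<Gamma> = {} \<Longrightarrow> wf (DOver C B)
     \<Longrightarrow> ND \<Gamma> (\<gamma>, DOver C B)"
| prodI: "ND \<Gamma> (\<alpha>, A) \<Longrightarrow> ND \<Delta> (\<beta>, B) \<Longrightarrow> cvars \<Gamma> \<inter> cvars \<Delta> = {}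
     \<Longrightarrow> ND (\<Gamma> + \<Delta>) (\<alpha> @ \<beta>, DProd A B)"
| prodE: "ND \<Delta> (\<delta>, DProd A B)
     \<Longrightarrow> ND (\<Gamma> + {#(\<alpha>, A), (\<beta>, B)#}) (\<gamma>1 @ \<alpha> @ \<beta> @ \<gamma>2, C)
     \<Longrightarrow> is_hyp_label \<alpha> (fsort A) \<Longrightarrow> is_hyp_label \<beta> (fsort B)
     \<Longrightarrow> set (svars \<alpha>) \<inter> set (svars \<beta>) = {}
     \<Longrightarrow> (set (svars \<alpha>) \<union> set (svars \<beta>)) \<inter> cvars \<Gamma> = {}
     \<Longrightarrow> cvars \<Gamma> \<inter> cvars \<Delta> = {}
     \<Longrightarrow> ND (\<Gamma> + \<Delta>) (\<gamma>1 @ \<delta> @ \<gamma>2, C)"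
| downE: "ND \<Gamma> (\<alpha>, A) \<Longrightarrow> ND \<Delta> (\<gamma>, DDown k A C) \<Longrightarrow> wrap_defined k \<alpha>
     \<Longrightarrow> cvars \<Gamma> \<inter> cvars \<Delta> = {}
     \<Longrightarrow> ND (\<Gamma> + \<Delta>) (swrap k \<alpha> \<gamma>, C)"
| downI: "ND (add_mset (\<alpha>, A) \<Gamma>) (swrap k \<alpha> \<gamma>, C) \<Longrightarrow> wrap_defined k \<alpha>
     \<Longrightarrow> is_hyp_label \<alpha> (fsort A) \<Longrightarrow> set (svars \<alpha>) \<inter> cvars \<Gamma> = {}
     \<Longrightarrow> wf (DDown k A C)
     \<Longrightarrow> ND \<Gamma> (\<gamma>, DDown k A C)"
| upE: "ND \<Gamma> (\<gamma>, DUp k C B) \<Longrightarrow> ND \<Delta> (\<beta>, B) \<Longrightarrow> wrap_defined k \<gamma>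
     \<Longrightarrow> cvars \<Gamma> \<inter> cvars \<Delta> = {}
     \<Longrightarrow> ND (\<Gamma> + \<Delta>) (swrap k \<gamma> \<beta>, C)"
| upI: "ND (add_mset (\<beta>, B) \<Gamma>) (swrap k \<gamma> \<beta>, C) \<Longrightarrow> wrap_defined k \<gamma>
     \<Longrightarrow> is_hyp_label \<beta> (fsort B) \<Longrightarrow> set (svars \<beta>) \<inter> cvars \<Gamma> = {}
     \<Longrightarrow> wf (DUp k C B)
     \<Longrightarrow> ND \<Gamma> (\<gamma>, DUp k C B)"
| wrapI: "ND \<Gamma> (\<alpha>, A) \<Longrightarrow> ND \<Delta> (\<beta>, B) \<Longrightarrow> wrap_defined k \<alpha>
     \<Longrightarrow> cvars \<Gamma> \<inter> cvars \<Delta> = {}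
     \<Longrightarrow> ND (\<Gamma> + \<Delta>) (swrap k \<alpha> \<beta>, DWrap k A B)"
| wrapE: "ND \<Delta> (\<delta>, DWrap k A B)
     \<Longrightarrow> ND (\<Gamma> + {#(\<alpha>, A), (\<beta>, B)#}) (\<gamma>1 @ swrap k \<alpha> \<beta> @ \<gamma>2, C)
     \<Longrightarrow> wrap_defined k \<alpha>
     \<Longrightarrow> is_hyp_label \<alpha> (fsort A) \<Longrightarrow> is_hyp_label \<beta> (fsort B)
     \<Longrightarrow> set (svars \<alpha>) \<inter> set (svars \<beta>) = {}
     \<Longrightarrow> (set (svars \<alpha>) \<union> set (svars \<beta>)) \<inter> cvars \<Gamma> = {}
     \<Longrightarrow> cvars \<Gamma> \<inter> cvars \<Delta> = {}
     \<Longrightarrow> ND (\<Gamma> + \<Delta>) (\<gamma>1 @ \<delta> @ \<gamma>2, C)"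

text \<open>Formula occurrences are natural numbers, labelled by lab. A link is
  (rule, ordered premisses, ordered conclusions). T* = tensor links, P* = par links.\<close>
datatype rule =
    TLOver | TLUnder | TRProd | TLUp wk | TLDown wk | TRWrap wk
  | PLProd | PLWrap wk | PROver | PRUnder | PRUp wk | PRDown wk

type_synonym link = "rule \<times> nat list \<times> nat list"

fun link_ok :: "(nat \<Rightarrow> formula) \<Rightarrow> link \<Rightarrow> bool" where
  "link_ok lab (r, ps, cs) = (case r of
     TLOver \<Rightarrow> (\<exists>a b c. ps = [a, b] \<and> cs = [c] \<and> lab a = DOver (lab c) (lab b))
   | TLUnder \<Rightarrow> (\<exists>a b c. ps = [a, b] \<and> cs = [c] \<and> lab b = DUnder (lab a) (lab c))
   | TRProd \<Rightarrow> (\<exists>a b c. ps = [a, b] \<and> cs = [c] \<and> lab c = DProd (lab a) (lab b))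
   | TLUp k \<Rightarrow> (\<exists>a b c. ps = [a, b] \<and> cs = [c] \<and> lab a = DUp k (lab c) (lab b))
   | TLDown k \<Rightarrow> (\<exists>a b c. ps = [a, b] \<and> cs = [c] \<and> lab b = DDown k (lab a) (lab c))
   | TRWrap k \<Rightarrow> (\<exists>a b c. ps = [a, b] \<and> cs = [c] \<and> lab c = DWrap k (lab a) (lab b))
   | PLProd \<Rightarrow> (\<exists>a b c. ps = [c] \<and> cs = [a, b] \<and> lab c = DProd (lab a) (lab b))
   | PLWrap k \<Rightarrow> (\<exists>a b c. ps = [c] \<and> cs = [a, b] \<and> lab c = DWrap k (lab a) (lab b))
   | PROver \<Rightarrow> (\<exists>m b c. ps = [c] \<and> cs = [m, b] \<and> lab m = DOver (lab c) (lab b))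
   | PRUnder \<Rightarrow> (\<exists>a m c. ps = [c] \<and> cs = [a, m] \<and> lab m = DUnder (lab a) (lab c))
   | PRUp k \<Rightarrow> (\<exists>m b c. ps = [c] \<and> cs = [m, b] \<and> lab m = DUp k (lab c) (lab b))
   | PRDown k \<Rightarrow> (\<exists>a m c. ps = [c] \<and> cs = [a, m] \<and> lab m = DDown k (lab a) (lab c)))"

definition proof_structure :: "nat set \<Rightarrow> (nat \<Rightarrow> formula) \<Rightarrow> link set \<Rightarrow> bool" where
  "proof_structure V lab links \<longleftrightarrow>
     finite V \<and> finite links \<and> (\<forall>v\<in>V. wf (lab v)) \<and>
     (\<forall>(r, ps, cs)\<in>links. link_ok lab (r, ps, cs) \<and> distinct (ps @ cs) \<and> set (ps @ cs) \<subseteq> V) \<and>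
     (\<forall>v. \<forall>l1\<in>links. \<forall>l2\<in>links. v \<in> set (fst (snd l1)) \<longrightarrow> v \<in> set (fst (snd l2)) \<longrightarrow> l1 = l2) \<and>
     (\<forall>v. \<forall>l1\<in>links. \<forall>l2\<in>links. v \<in> set (snd (snd l1)) \<longrightarrow> v \<in> set (snd (snd l2)) \<longrightarrow> l1 = l2)"

definition ps_hyps :: "nat set \<Rightarrow> link set \<Rightarrow> nat set" where
  "ps_hyps V links = {v \<in> V. \<not> (\<exists>l\<in>links. v \<in> set (snd (snd l)))}"

definition ps_concls :: "nat set \<Rightarrow> link set \<Rightarrow> nat set" where
  "ps_concls V links = {v \<in> V. \<not> (\<exists>l\<in>links. v \<in> set (fst (snd l)))}"

fun is_par :: "rule \<Rightarrow> bool" where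
  "is_par PLProd = True" | "is_par (PLWrap _) = True" | "is_par PROver = True"
| "is_par PRUnder = True" | "is_par (PRUp _) = True" | "is_par (PRDown _) = True"
| "is_par _ = False"

text \<open>Auxiliary inputs: non-main conclusions of par links.\<close>
fun aux_inputs :: "link \<Rightarrow> nat list" where
  "aux_inputs (r, ps, cs) = (case r of
      PLProd \<Rightarrow> cs | PLWrap _ \<Rightarrow> cs
    | PROver \<Rightarrow> [cs ! 1] | PRUnder \<Rightarrow> [cs ! 0]
    | PRUp _ \<Rightarrow> [cs ! 1] | PRDown _ \<Rightarrow> [cs ! 0]
    | _ \<Rightarrow> [])"

text \<open>Vertices: original formula occurrences, and the fresh sort-0 vertices
  Exp u j (j = 0..m) of the expansion of the auxiliary input u.\<close>
datatype avtx = Orig nat | Exp nat nat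

datatype item = ISym sym | IV avtx

datatype parlink =
    LProdL avtx "item list" "item list"          (* [L\<bullet>]: premiss (main), e_A, e_B *)
  | LWrapL wk avtx "item list" "item list"       (* [L\<odot>_k]: premiss (main), e_A, e_B *)
  | ROverL avtx avtx "item list"                 (* [R/]: premiss, main C/B, e_B *)
  | RUnderL avtx "item list" avtx                (* [R\]: premiss, e_A, main A\C *)
  | RUpL wk avtx avtx "item list"                (* [R\<up>_k]: premiss, main, e_B *)
  | RDownL wk avtx "item list" avtx              (* [R\<down>_k]: premiss, e_A, main *)

record aps =
  a_combs :: "(item list \<times> avtx) set"            (* (premisses, conclusion) *)
  a_tens :: "(wk \<times> avtx \<times> avtx \<times> avtx) set"     (* \<times>_k tensor: k, premiss1, premiss2, concl *)
  a_pars :: "parlink set"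

definition expn :: "nat \<Rightarrow> nat \<Rightarrow> item list" where
  "expn u m = IV (Exp u 0) # concat (map (\<lambda>j. [ISym Sep, IV (Exp u j)]) [1..<Suc m])"

fun par_of :: "(nat \<Rightarrow> formula) \<Rightarrow> link \<Rightarrow> parlink" where
  "par_of lab (r, ps, cs) = (let ex = (\<lambda>u. expn u (fsort (lab u))) in
     case r of
       PLProd \<Rightarrow> LProdL (Orig (ps ! 0)) (ex (cs ! 0)) (ex (cs ! 1))
     | PLWrap k \<Rightarrow> LWrapL k (Orig (ps ! 0)) (ex (cs ! 0)) (ex (cs ! 1))
     | PROver \<Rightarrow> ROverL (Orig (ps ! 0)) (Orig (cs ! 0)) (ex (cs ! 1))
     | PRUnder \<Rightarrow> RUnderL (Orig (ps ! 0)) (ex (cs ! 0)) (Orig (cs ! 1))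
     | PRUp k \<Rightarrow> RUpL k (Orig (ps ! 0)) (Orig (cs ! 0)) (ex (cs ! 1))
     | PRDown k \<Rightarrow> RDownL k (Orig (ps ! 0)) (ex (cs ! 0)) (Orig (cs ! 1))
     | _ \<Rightarrow> undefined)"

text \<open>The abstract proof structure of (V, lab, links), hypothesis v labelled by hl v.\<close>
definition aps_of :: "nat set \<Rightarrow> (nat \<Rightarrow> formula) \<Rightarrow> link set \<Rightarrow> (nat \<Rightarrow> str) \<Rightarrow> aps" where
  "aps_of V lab links hl = \<lparr>
     a_combs =
       {([IV (Orig (ps ! 0)), IV (Orig (ps ! 1))], Orig (cs ! 0)) | r ps cs.
           (r, ps, cs) \<in> links \<and> r \<in> {TLOver, TLUnder, TRProd}}
       \<union> {(map ISym (hl h), Orig h) | h. h \<in> ps_hyps V links}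
       \<union> {(expn u (fsort (lab u)), Orig u) | u l. l \<in> links \<and> u \<in> set (aux_inputs l)},
     a_tens = {(k, Orig (ps ! 0), Orig (ps ! 1), Orig (cs ! 0)) | k r ps cs.
           (r, ps, cs) \<in> links \<and> (r = TLUp k \<or> r = TLDown k \<or> r = TRWrap k)},
     a_pars = {par_of lab l | l. l \<in> links \<and> is_par (fst l)} \<rparr>"

fun avsort :: "(nat \<Rightarrow> formula) \<Rightarrow> avtx \<Rightarrow> nat" where
  "avsort lab (Orig v) = fsort (lab v)"
| "avsort lab (Exp _ _) = 0"

fun isort :: "(avtx \<Rightarrow> nat) \<Rightarrow> item \<Rightarrow> nat" where
  "isort vs (ISym Sep) = 1"
| "isort vs (ISym (SVar _)) = 0"
| "isort vs (IV v) = vs v"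

definition lsort :: "(avtx \<Rightarrow> nat) \<Rightarrow> item list \<Rightarrow> nat" where
  "lsort vs xs = sum_list (map (isort vs) xs)"

text \<open>The 1 between a1 and a2 is the one selected by k.\<close>
definition sel_ok :: "(avtx \<Rightarrow> nat) \<Rightarrow> wk \<Rightarrow> item list \<Rightarrow> item list \<Rightarrow> bool" where
  "sel_ok vs k a1 a2 = (case k of
      WFirst \<Rightarrow> lsort vs a1 = 0
    | WLast \<Rightarrow> lsort vs a2 = 0
    | WNth n \<Rightarrow> 1 \<le> n \<and> lsort vs a1 = n - 1)"

inductive contract :: "(avtx \<Rightarrow> nat) \<Rightarrow> aps \<Rightarrow> aps \<Rightarrow> bool" for vs where
  plus: "(a1 @ [IV w] @ a2, v) \<in> a_combs X \<Longrightarrow> (b, w) \<in> a_combs X \<Longrightarrow> w \<noteq> v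
    \<Longrightarrow> contract vs X (X\<lparr>a_combs := insert (a1 @ b @ a2, v)
                           (a_combs X - {(a1 @ [IV w] @ a2, v), (b, w)})\<rparr>)"
| times: "(k, v1, v2, v) \<in> a_tens X \<Longrightarrow> (a1 @ [ISym Sep] @ a2, v1) \<in> a_combs X
    \<Longrightarrow> (b, v2) \<in> a_combs X \<Longrightarrow> sel_ok vs k a1 a2 \<Longrightarrow> v1 \<noteq> v2
    \<Longrightarrow> contract vs X (X\<lparr>a_tens := a_tens X - {(k, v1, v2, v)},
          a_combs := insert (a1 @ b @ a2, v)
                       (a_combs X - {(a1 @ [ISym Sep] @ a2, v1), (b, v2)})\<rparr>)"
| under: "RUnderL v1 eA v \<in> a_pars X \<Longrightarrow> (eA @ b, v1) \<in> a_combs X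
    \<Longrightarrow> contract vs X (X\<lparr>a_pars := a_pars X - {RUnderL v1 eA v},
          a_combs := insert (b, v) (a_combs X - {(eA @ b, v1)})\<rparr>)"
| over: "ROverL v1 v eB \<in> a_pars X \<Longrightarrow> (b @ eB, v1) \<in> a_combs X
    \<Longrightarrow> contract vs X (X\<lparr>a_pars := a_pars X - {ROverL v1 v eB},
          a_combs := insert (b, v) (a_combs X - {(b @ eB, v1)})\<rparr>)"
| up: "RUpL k v1 v eB \<in> a_pars X \<Longrightarrow> (a1 @ eB @ a2, v1) \<in> a_combs X \<Longrightarrow> sel_ok vs k a1 a2
    \<Longrightarrow> contract vs X (X\<lparr>a_pars := a_pars X - {RUpL k v1 v eB},
          a_combs := insert (a1 @ [ISym Sep] @ a2, v) (a_combs X - {(a1 @ eB @ a2, v1)})\<rparr>)"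
| down: "RDownL k v1 eA v \<in> a_pars X \<Longrightarrow> eA = e1 @ [ISym Sep] @ e2 \<Longrightarrow> sel_ok vs k e1 e2
    \<Longrightarrow> (e1 @ b @ e2, v1) \<in> a_combs X
    \<Longrightarrow> contract vs X (X\<lparr>a_pars := a_pars X - {RDownL k v1 eA v},
          a_combs := insert (b, v) (a_combs X - {(e1 @ b @ e2, v1)})\<rparr>)"
| prod: "LProdL v1 eA eB \<in> a_pars X \<Longrightarrow> (g1 @ eA @ eB @ g2, v2) \<in> a_combs X
    \<Longrightarrow> contract vs X (X\<lparr>a_pars := a_pars X - {LProdL v1 eA eB},
          a_combs := insert (g1 @ [IV v1] @ g2, v2) (a_combs X - {(g1 @ eA @ eB @ g2, v2)})\<rparr>)"
| wrap: "LWrapL k v1 eA eB \<in> a_pars X \<Longrightarrow> eA = e1 @ [ISym Sep] @ e2 \<Longrightarrow> sel_ok vs k e1 e2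
    \<Longrightarrow> (g1 @ e1 @ eB @ e2 @ g2, v2) \<in> a_combs X
    \<Longrightarrow> contract vs X (X\<lparr>a_pars := a_pars X - {LWrapL k v1 eA eB},
          a_combs := insert (g1 @ [IV v1] @ g2, v2)
                       (a_combs X - {(g1 @ e1 @ eB @ e2 @ g2, v2)})\<rparr>)"

end

theory Submission
  imports Defs "HOL-Library.Nat_Bijection"
begin

text \<open>Every comb of an abstract proof structure reachable from the initial one denotes a natural
  deduction derivation. Read the comb as a string, replacing the expansion vertex \<open>Exp u j\<close> by a
  fresh variable and each vertex premiss by the string of an arbitrary derivation of its formula:
  this string is derivable with the formula of the comb's conclusion, from the hypotheses whose
  variables occur in the comb (the given ones, and one hypothesis \<open>aux_hyp u\<close> per auxiliary input)
  together with the contexts of the plugged derivations. Initial combs denote hypotheses or one of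
  the rules \<open>/E\<close>, \<open>\<backslash>E\<close>, \<open>\<bullet>I\<close>, and each contraction matches a rule: \<open>[+]\<close> is substitution of
  derivations, \<open>[\<times>k]\<close> is \<open>\<up>kE\<close>, \<open>\<down>kE\<close> or \<open>\<odot>kI\<close>, the right par contractions are the
  introduction rules and \<open>[\<bullet>]\<close>, \<open>[\<odot>k]\<close> the product eliminations. A withdrawn auxiliary hypothesis
  is fresh because its variables no longer occur in any comb, and plugged derivations are
  required to avoid such variables. Plugging nothing into the final single comb gives the theorem.\<close>

lemma ssort_Nil [simp]: "ssort [] = 0"
  and ssort_Cons [simp]: "ssort (a # y) = (if a = Sep then 1 else 0) + ssort y"
  and ssort_append [simp]: "ssort (x @ y) = ssort x + ssort y"
  by (simp_all add: ssort_def)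

lemma svars_Nil [simp]: "svars [] = []"
  and svars_Cons_Sep [simp]: "svars (Sep # y) = svars y"
  and svars_Cons_SVar [simp]: "svars (SVar p # y) = p # svars y"
  and svars_append [simp]: "svars (x @ y) = svars x @ svars y"
  by (simp_all add: svars_def)

lemma in_set_svars_iff: "p \<in> set (svars s) \<longleftrightarrow> SVar p \<in> set s"
  by (induction s) (auto simp: svars_def split: sym.splits)

lemma hlabel_snoc: "xs \<noteq> [] \<Longrightarrow> hlabel (xs @ [y]) = hlabel xs @ [Sep, SVar y]"
  by (induction xs rule: hlabel.induct) auto

lemma svars_hlabel [simp]: "svars (hlabel ps) = ps"
  by (induction ps rule: hlabel.induct) auto

lemma ssort_hlabel [simp]: "ssort (hlabel ps) = length ps - 1"
  by (induction ps rule: hlabel.induct) auto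

lemma is_hyp_labelD: "is_hyp_label \<alpha> m \<Longrightarrow> svars \<alpha> \<noteq> [] \<and> distinct (svars \<alpha>) \<and> ssort \<alpha> = m"
  unfolding is_hyp_label_def by auto

lemma length_sep_positions: "length (sep_positions x) = ssort x"
proof -
  have "length (filter (\<lambda>i. x ! i = Sep) [0..<length x])
      = length (filter (\<lambda>a. a = Sep) (map ((!) x) [0..<length x]))"
    by (simp add: filter_map o_def)
  then show ?thesis by (simp add: sep_positions_def ssort_def map_nth)
qed

lemma sep_positions_append_Sep:
  "sep_positions (x @ Sep # y)
     = sep_positions x @ length x # map (\<lambda>i. i + Suc (length x)) (sep_positions y)"
proof -
  let ?shift = "\<lambda>i. i + Suc (length x)"
  have "[0..<length (x @ Sep # y)] = [0..<length x] @ [length x..<length x + Suc (length y)]"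
    using upt_add_eq_append[of 0 "length x" "Suc (length y)"] by simp
  also have "[length x..<length x + Suc (length y)] = length x # [Suc (length x)..<length y + Suc (length x)]"
    by (metis add.commute add_Suc_right less_add_Suc1 upt_conv_Cons)
  also have "[Suc (length x)..<length y + Suc (length x)] = map ?shift [0..<length y]"
    by (simp only: map_add_upt)
  finally have upt: "[0..<length (x @ Sep # y)]
      = [0..<length x] @ length x # map ?shift [0..<length y]" .
  have "filter (\<lambda>i. (x @ Sep # y) ! i = Sep) [0..<length x] = filter (\<lambda>i. x ! i = Sep) [0..<length x]"
    by (rule filter_cong) (auto simp: nth_append)
  moreover have "filter (\<lambda>i. (x @ Sep # y) ! i = Sep) (map ?shift [0..<length y])
      = map ?shift (filter (\<lambda>i. y ! i = Sep) [0..<length y])"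
    by (simp add: filter_map o_def nth_append)
  ultimately show ?thesis unfolding sep_positions_def upt by simp
qed

text \<open>The wrap index \<open>k\<close> selects the separator of a string that has \<open>s1\<close> separators
  before it and \<open>s2\<close> after it.\<close>
definition selects_sep :: "wk \<Rightarrow> nat \<Rightarrow> nat \<Rightarrow> bool" where
  "selects_sep k s1 s2 =
     (case k of WFirst \<Rightarrow> s1 = 0 | WLast \<Rightarrow> s2 = 0 | WNth n \<Rightarrow> 1 \<le> n \<and> s1 = n - 1)"

lemma sel_ok_iff_selects_sep: "sel_ok vs k a1 a2 \<longleftrightarrow> selects_sep k (lsort vs a1) (lsort vs a2)"
  by (simp add: sel_ok_def selects_sep_def split: wk.splits)

lemma selsep_append_Sep:
  assumes "selects_sep k (ssort x) (ssort y)"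
  shows "selsep k (x @ Sep # y) = Some (length x)"
proof (cases k)
  case WFirst
  then have "sep_positions x = []" using assms length_sep_positions[of x] by (simp add: selects_sep_def)
  then show ?thesis using WFirst by (simp add: selsep_def sep_positions_append_Sep)
next
  case WLast
  then have "sep_positions y = []" using assms length_sep_positions[of y] by (simp add: selects_sep_def)
  then show ?thesis using WLast by (simp add: selsep_def sep_positions_append_Sep)
next
  case (WNth n)
  then have "1 \<le> n" "length (sep_positions x) = n - 1"
    using assms length_sep_positions[of x] by (auto simp: selects_sep_def)
  then show ?thesis
    using WNth by (simp add: selsep_def sep_positions_append_Sep Let_def nth_append)
qed

lemma swrap_append_Sep:
  assumes "selects_sep k (ssort x) (ssort y)"
  shows "swrap k (x @ Sep # y) b = x @ b @ y" and "wrap_defined k (x @ Sep # y)"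
  using selsep_append_Sep[OF assms] by (simp_all add: swrap_def wrap_defined_def)

section \<open>Reading combs as strings\<close>

text \<open>A comb premiss list is read as a string by sending the expansion vertex \<open>Exp u j\<close> to
  the variable \<open>ev u j\<close> and each original vertex \<open>n\<close> to the string \<open>snd (f n)\<close> of a
  derivation \<open>f n\<close> plugged into it; \<open>fst (f n)\<close> is the context of that derivation.\<close>

fun item_vars :: "(nat \<Rightarrow> nat \<Rightarrow> nat) \<Rightarrow> item \<Rightarrow> nat list" where
  "item_vars ev (ISym (SVar p)) = [p]"
| "item_vars ev (ISym Sep) = []"
| "item_vars ev (IV (Orig n)) = []"
| "item_vars ev (IV (Exp u j)) = [ev u j]"

definition comb_vars :: "(nat \<Rightarrow> nat \<Rightarrow> nat) \<Rightarrow> item list \<Rightarrow> nat list" where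
  "comb_vars ev xs = concat (map (item_vars ev) xs)"

fun item_origs :: "item \<Rightarrow> nat list" where
  "item_origs (IV (Orig n)) = [n]"
| "item_origs (ISym s) = []"
| "item_origs (IV (Exp u j)) = []"

definition comb_origs :: "item list \<Rightarrow> nat list" where
  "comb_origs xs = concat (map item_origs xs)"

fun inst_item :: "(nat \<Rightarrow> nat \<Rightarrow> nat) \<Rightarrow> (nat \<Rightarrow> judg multiset \<times> str) \<Rightarrow> item \<Rightarrow> str" where
  "inst_item ev f (ISym s) = [s]"
| "inst_item ev f (IV (Orig n)) = snd (f n)"
| "inst_item ev f (IV (Exp u j)) = [SVar (ev u j)]"

definition comb_inst :: "(nat \<Rightarrow> nat \<Rightarrow> nat) \<Rightarrow> (nat \<Rightarrow> judg multiset \<times> str) \<Rightarrow> item list \<Rightarrow> str" where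
  "comb_inst ev f xs = concat (map (inst_item ev f) xs)"

definition plug_ctx :: "(nat \<Rightarrow> judg multiset \<times> str) \<Rightarrow> item list \<Rightarrow> judg multiset" where
  "plug_ctx f xs = sum_list (map (\<lambda>n. fst (f n)) (comb_origs xs))"

lemma comb_vars_simps [simp]:
  "comb_vars ev [] = []" "comb_vars ev (a # xs) = item_vars ev a @ comb_vars ev xs"
  "comb_vars ev (xs @ ys) = comb_vars ev xs @ comb_vars ev ys"
  by (simp_all add: comb_vars_def)

lemma comb_origs_simps [simp]:
  "comb_origs [] = []" "comb_origs (a # xs) = item_origs a @ comb_origs xs"
  "comb_origs (xs @ ys) = comb_origs xs @ comb_origs ys"
  by (simp_all add: comb_origs_def)

lemma comb_inst_simps [simp]:
  "comb_inst ev f [] = []" "comb_inst ev f (a # xs) = inst_item ev f a @ comb_inst ev f xs"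
  "comb_inst ev f (xs @ ys) = comb_inst ev f xs @ comb_inst ev f ys"
  by (simp_all add: comb_inst_def)

lemma plug_ctx_simps [simp]:
  "plug_ctx f [] = {#}" "plug_ctx f (xs @ ys) = plug_ctx f xs + plug_ctx f ys"
  "plug_ctx f (IV (Orig n) # xs) = fst (f n) + plug_ctx f xs"
  "plug_ctx f (ISym s # xs) = plug_ctx f xs" "plug_ctx f (IV (Exp u j) # xs) = plug_ctx f xs"
  by (simp_all add: plug_ctx_def)

lemma lsort_simps [simp]:
  "lsort srt [] = 0" "lsort srt (a # xs) = isort srt a + lsort srt xs"
  "lsort srt (xs @ ys) = lsort srt xs + lsort srt ys"
  by (simp_all add: lsort_def)

lemma comb_vars_map_ISym [simp]: "comb_vars ev (map ISym s) = svars s"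
  by (induction s) (auto simp: svars_def split: sym.splits)

lemma comb_origs_map_ISym [simp]: "comb_origs (map ISym s) = []"
  by (induction s) auto

lemma comb_inst_map_ISym [simp]: "comb_inst ev f (map ISym s) = s"
  by (induction s) auto

lemma lsort_map_ISym [simp]: "lsort srt (map ISym s) = ssort s"
proof (induction s)
  case (Cons a s) then show ?case by (cases a) auto
qed simp

lemma ISym_SVar_in_map_iff: "ISym (SVar p) \<in> set (map ISym s) \<longleftrightarrow> p \<in> set (svars s)"
  by (auto simp: in_set_svars_iff)

lemma in_set_comb_origs_iff: "n \<in> set (comb_origs xs) \<longleftrightarrow> IV (Orig n) \<in> set xs"
proof (induction xs)
  case (Cons a xs) then show ?case by (cases a rule: item_origs.cases) auto
qed simp

lemma ssort_comb_inst:
  assumes "\<forall>n\<in>set (comb_origs xs). ssort (snd (f n)) = fsort (lab n)"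
  shows "ssort (comb_inst ev f xs) = lsort (avsort lab) xs"
  using assms
proof (induction xs)
  case (Cons a xs)
  then show ?case by (cases "(ev, a)" rule: item_vars.cases) auto
qed simp

lemma comb_inst_cong: "\<forall>n\<in>set (comb_origs xs). f n = g n \<Longrightarrow> comb_inst ev f xs = comb_inst ev g xs"
proof (induction xs)
  case (Cons a xs) then show ?case by (cases a rule: item_origs.cases) auto
qed simp

lemma plug_ctx_cong: "\<forall>n\<in>set (comb_origs xs). f n = g n \<Longrightarrow> plug_ctx f xs = plug_ctx g xs"
  by (simp add: plug_ctx_def cong: map_cong)

lemma plug_ctx_no_origs: "comb_origs xs = [] \<Longrightarrow> plug_ctx f xs = {#}"
  by (simp add: plug_ctx_def)

lemma expn_Suc: "expn u (Suc m) = expn u m @ [ISym Sep, IV (Exp u (Suc m))]"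
  by (simp add: expn_def)

lemma comb_vars_expn: "comb_vars ev (expn u m) = map (ev u) [0..<Suc m]"
  by (induction m) (simp_all add: expn_def)

lemma comb_origs_expn [simp]: "comb_origs (expn u m) = []"
  by (induction m) (simp_all add: expn_def)

lemma comb_inst_expn: "comb_inst ev f (expn u m) = hlabel (map (ev u) [0..<Suc m])"
proof (induction m)
  case (Suc m)
  have "hlabel (map (ev u) [0..<Suc (Suc m)]) = hlabel (map (ev u) [0..<Suc m]) @ [Sep, SVar (ev u (Suc m))]"
    using hlabel_snoc[of "map (ev u) [0..<Suc m]" "ev u (Suc m)"] by simp
  then show ?case using Suc by (simp add: expn_Suc del: upt_Suc)
qed (simp add: expn_def)

lemma lsort_expn [simp]: "lsort (avsort lab) (expn u m) = m"
  by (induction m) (simp_all add: expn_def)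

lemma ISym_SVar_notin_expn [simp]: "ISym (SVar p) \<notin> set (expn u m)"
  by (induction m) (auto simp: expn_def)

lemma IV_Orig_notin_expn [simp]: "IV (Orig n) \<notin> set (expn u m)"
  by (induction m) (auto simp: expn_def)

lemma cvars_simps [simp]:
  "cvars {#} = {}" "cvars (A + B) = cvars A \<union> cvars B"
  "cvars (add_mset j A) = set (svars (fst j)) \<union> cvars A"
  by (auto simp: cvars_def)

lemma cvars_plug_ctx: "cvars (plug_ctx f xs) = (\<Union>n\<in>set (comb_origs xs). cvars (fst (f n)))"
proof -
  have "cvars (sum_list (map g ns)) = (\<Union>n\<in>set ns. cvars (g n))" for g :: "nat \<Rightarrow> judg multiset" and ns
    by (induction ns) auto
  then show ?thesis by (simp add: plug_ctx_def)
qed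

lemma cvars_mset_set: "finite F \<Longrightarrow> cvars (mset_set F) = (\<Union>j\<in>F. set (svars (fst j)))"
  by (simp add: cvars_def)

abbreviation judg_vars :: "judg \<Rightarrow> nat set" where
  "judg_vars j \<equiv> set (svars (fst j))"

fun left_par_premiss :: "parlink \<Rightarrow> avtx option" where
  "left_par_premiss (LProdL v1 _ _) = Some v1"
| "left_par_premiss (LWrapL _ v1 _ _) = Some v1"
| "left_par_premiss _ = None"

fun right_par_main :: "parlink \<Rightarrow> avtx option" where
  "right_par_main (ROverL _ v _) = Some v"
| "right_par_main (RUnderL _ _ v) = Some v"
| "right_par_main (RUpL _ _ v _) = Some v"
| "right_par_main (RDownL _ _ _ v) = Some v"
| "right_par_main _ = None"

locale labelled_proof_structure =
  fixes V :: "nat set" and lab :: "nat \<Rightarrow> formula" and links :: "link set"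
    and hs :: "nat list" and hl :: "nat \<Rightarrow> str"
  assumes proof_structure: "proof_structure V lab links"
    and distinct_hs: "distinct hs" and set_hs: "set hs = ps_hyps V links"
    and hyp_labels: "\<forall>h\<in>set hs. is_hyp_label (hl h) (fsort (lab h))"
    and distinct_hyp_vars: "distinct (concat (map (\<lambda>h. svars (hl h)) hs))"
begin

abbreviation aps0 :: aps where
  "aps0 \<equiv> aps_of V lab links hl"

definition hyp_vars :: "nat set" where
  "hyp_vars = (\<Union>h\<in>set hs. set (svars (hl h)))"

text \<open>Fresh variables for the expansion vertices: every one exceeds all hypothesis variables.\<close>
definition exp_var :: "nat \<Rightarrow> nat \<Rightarrow> nat" where
  "exp_var u j = Suc (Max (insert 0 hyp_vars)) + prod_encode (u, j)"

definition exp_vars :: "nat set" where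
  "exp_vars = {x. \<exists>u j. x = exp_var u j}"

abbreviation vars_of :: "item list \<Rightarrow> nat set" where
  "vars_of xs \<equiv> set (comb_vars exp_var xs)"

abbreviation comb_str :: "(nat \<Rightarrow> judg multiset \<times> str) \<Rightarrow> item list \<Rightarrow> str" where
  "comb_str f xs \<equiv> comb_inst exp_var f xs"

definition aux_vertices :: "nat set" where
  "aux_vertices = {u. \<exists>l\<in>links. u \<in> set (aux_inputs l)}"

text \<open>The hypothesis of the natural deduction proof introduced for the auxiliary input \<open>u\<close>;
  it is withdrawn again by the rule corresponding to the par link of \<open>u\<close>.\<close>
definition aux_hyp :: "nat \<Rightarrow> judg" where
  "aux_hyp u = (hlabel (map (exp_var u) [0..<Suc (fsort (lab u))]), lab u)"

definition hyp_judgs :: "judg set" where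
  "hyp_judgs = (\<lambda>h. (hl h, lab h)) ` set hs"

definition all_hyps :: "judg set" where
  "all_hyps = hyp_judgs \<union> aux_hyp ` aux_vertices"

lemma finite_links: "finite links"
  and wf_lab: "v \<in> V \<Longrightarrow> wf (lab v)"
  using proof_structure by (auto simp: proof_structure_def)

lemma link_wellformed:
  "(r, ps, cs) \<in> links \<Longrightarrow> link_ok lab (r, ps, cs) \<and> distinct (ps @ cs) \<and> set (ps @ cs) \<subseteq> V"
  using proof_structure unfolding proof_structure_def by blast

lemma link_vertex_in_V: "(r, ps, cs) \<in> links \<Longrightarrow> x \<in> set ps \<or> x \<in> set cs \<Longrightarrow> x \<in> V"
  using link_wellformed by fastforce

lemma link_of_concl_unique:
  "l1 \<in> links \<Longrightarrow> l2 \<in> links \<Longrightarrow> x \<in> set (snd (snd l1)) \<Longrightarrow> x \<in> set (snd (snd l2)) \<Longrightarrow> l1 = l2"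
  using proof_structure unfolding proof_structure_def by blast

lemma link_of_premiss_unique:
  "l1 \<in> links \<Longrightarrow> l2 \<in> links \<Longrightarrow> x \<in> set (fst (snd l1)) \<Longrightarrow> x \<in> set (fst (snd l2)) \<Longrightarrow> l1 = l2"
  using proof_structure unfolding proof_structure_def by blast

lemma hyp_in_V_not_concl: "h \<in> set hs \<Longrightarrow> h \<in> V \<and> (\<forall>l\<in>links. h \<notin> set (snd (snd l)))"
  using set_hs by (auto simp: ps_hyps_def)

lemma aux_input_concl: "l \<in> links \<Longrightarrow> u \<in> set (aux_inputs l) \<Longrightarrow> u \<in> set (snd (snd l)) \<and> is_par (fst l)"
proof -
  assume a: "l \<in> links" "u \<in> set (aux_inputs l)"
  obtain r ps cs where l: "l = (r, ps, cs)" by (cases l)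
  then have "link_ok lab (r, ps, cs)" using link_wellformed a by blast
  then show ?thesis using a l by (cases r) auto
qed

lemma aux_verticesI: "l \<in> links \<Longrightarrow> u \<in> set (aux_inputs l) \<Longrightarrow> u \<in> aux_vertices"
  by (auto simp: aux_vertices_def)

lemma aux_input_in_V: "l \<in> links \<Longrightarrow> u \<in> set (aux_inputs l) \<Longrightarrow> u \<in> V"
  by (metis aux_input_concl link_vertex_in_V prod.collapse)

lemma exp_var_eq_iff: "exp_var u j = exp_var u' j' \<longleftrightarrow> u = u' \<and> j = j'"
  by (simp add: exp_var_def prod_encode_eq)

lemma exp_var_in_exp_vars [simp]: "exp_var u j \<in> exp_vars"
  by (auto simp: exp_vars_def)

lemma hyp_vars_disjoint_exp_vars: "hyp_vars \<inter> exp_vars = {}"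
proof -
  have "finite hyp_vars" by (simp add: hyp_vars_def)
  then have "x \<le> Max (insert 0 hyp_vars)" if "x \<in> hyp_vars" for x
    using that by simp
  then have "x < exp_var u j" if "x \<in> hyp_vars" for x u j
    using that by (fastforce simp: exp_var_def)
  then show ?thesis by (auto simp: exp_vars_def)
qed

lemma hyp_label_props:
  "h \<in> set hs \<Longrightarrow> svars (hl h) \<noteq> [] \<and> distinct (svars (hl h)) \<and> ssort (hl h) = fsort (lab h)"
  using hyp_labels is_hyp_labelD by blast

lemma hyp_labels_disjoint:
  assumes "h1 \<in> set hs" "h2 \<in> set hs" "h1 \<noteq> h2"
  shows "set (svars (hl h1)) \<inter> set (svars (hl h2)) = {}"
proof -
  have "distinct (concat (map g xs)) \<Longrightarrow> x \<in> set xs \<Longrightarrow> y \<in> set xs \<Longrightarrow> x \<noteq> y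
      \<Longrightarrow> set (g x) \<inter> set (g y) = {}" for g :: "nat \<Rightarrow> nat list" and xs x y
    by (induction xs) auto
  then show ?thesis using distinct_hyp_vars assms by blast
qed

lemma svars_aux_hyp: "svars (fst (aux_hyp u)) = map (exp_var u) [0..<Suc (fsort (lab u))]"
  by (simp add: aux_hyp_def)

lemma aux_hyp_eq: "aux_hyp u = (fst (aux_hyp u), lab u)"
  by (simp add: aux_hyp_def)

lemma is_hyp_label_aux_hyp: "is_hyp_label (fst (aux_hyp u)) (fsort (lab u))"
  unfolding is_hyp_label_def aux_hyp_def
  by (rule exI[of _ "map (exp_var u) [0..<Suc (fsort (lab u))]"])
    (simp add: distinct_map inj_on_def exp_var_eq_iff del: upt_Suc)

lemma ND_aux_hyp: "u \<in> V \<Longrightarrow> ND {#aux_hyp u#} (fst (aux_hyp u), lab u)"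
  using ND.hyp[OF is_hyp_label_aux_hyp wf_lab, of u] by (simp add: aux_hyp_def)

lemma aux_hyp_vars_subset: "judg_vars (aux_hyp u) \<subseteq> exp_vars"
  by (auto simp: svars_aux_hyp simp del: upt_Suc)

lemma aux_hyp_vars_disjoint: "u1 \<noteq> u2 \<Longrightarrow> judg_vars (aux_hyp u1) \<inter> judg_vars (aux_hyp u2) = {}"
  by (auto simp: svars_aux_hyp exp_var_eq_iff simp del: upt_Suc)

lemma hyp_vars_disjoint_aux_hyp: "hyp_vars \<inter> judg_vars (aux_hyp u) = {}"
  using aux_hyp_vars_subset hyp_vars_disjoint_exp_vars by blast

lemma comb_vars_expn_aux: "vars_of (expn u (fsort (lab u))) = judg_vars (aux_hyp u)"
  by (simp add: comb_vars_expn svars_aux_hyp del: upt_Suc)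

lemma comb_str_expn_aux: "comb_str f (expn u (fsort (lab u))) = fst (aux_hyp u)"
  by (simp add: comb_inst_expn aux_hyp_def del: upt_Suc)

lemma finite_all_hyps: "finite all_hyps"
proof -
  have "aux_vertices = (\<Union>l\<in>links. set (aux_inputs l))" by (auto simp: aux_vertices_def)
  then show ?thesis using finite_links by (simp add: all_hyps_def hyp_judgs_def)
qed

lemma hyp_judg_in_all_hyps: "h \<in> set hs \<Longrightarrow> (hl h, lab h) \<in> all_hyps"
  by (simp add: all_hyps_def hyp_judgs_def)

lemma aux_hyp_in_all_hyps: "u \<in> aux_vertices \<Longrightarrow> aux_hyp u \<in> all_hyps"
  by (simp add: all_hyps_def)

lemma all_hyps_vars_nonempty: "j \<in> all_hyps \<Longrightarrow> judg_vars j \<noteq> {}"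
  using hyp_label_props by (auto simp: all_hyps_def hyp_judgs_def svars_aux_hyp)

lemma all_hyps_vars_disjoint:
  assumes "j1 \<in> all_hyps" "j2 \<in> all_hyps" "j1 \<noteq> j2"
  shows "judg_vars j1 \<inter> judg_vars j2 = {}"
proof -
  have hv: "h \<in> set hs \<Longrightarrow> set (svars (hl h)) \<subseteq> hyp_vars" for h by (auto simp: hyp_vars_def)
  consider (hh) h1 h2 where "h1 \<in> set hs" "h2 \<in> set hs" "j1 = (hl h1, lab h1)" "j2 = (hl h2, lab h2)"
    | (ha) h1 u2 where "h1 \<in> set hs" "j1 = (hl h1, lab h1)" "j2 = aux_hyp u2"
    | (ah) u1 h2 where "h2 \<in> set hs" "j2 = (hl h2, lab h2)" "j1 = aux_hyp u1"
    | (aa) u1 u2 where "j1 = aux_hyp u1" "j2 = aux_hyp u2"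
    using assms(1,2) unfolding all_hyps_def hyp_judgs_def by blast
  then show ?thesis
  proof cases
    case hh then show ?thesis using assms(3) hyp_labels_disjoint by auto
  next
    case ha then show ?thesis using hv[of h1] hyp_vars_disjoint_aux_hyp[of u2] by auto
  next
    case ah then show ?thesis using hv[of h2] hyp_vars_disjoint_aux_hyp[of u1] by auto
  next
    case aa then show ?thesis using assms(3) aux_hyp_vars_disjoint[of u1 u2] by auto
  qed
qed

lemma aps0_comb_cases:
  assumes "(\<pi>, v) \<in> a_combs aps0"
  obtains (tens) r a b cc where "(r, [a, b], [cc]) \<in> links" "\<pi> = [IV (Orig a), IV (Orig b)]" "v = Orig cc"
      "r = TLOver \<and> lab a = DOver (lab cc) (lab b) \<or> r = TLUnder \<and> lab b = DUnder (lab a) (lab cc)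
       \<or> r = TRProd \<and> lab cc = DProd (lab a) (lab b)"
  | (hyp) h where "h \<in> set hs" "\<pi> = map ISym (hl h)" "v = Orig h"
  | (aux) u l where "l \<in> links" "u \<in> set (aux_inputs l)" "\<pi> = expn u (fsort (lab u))" "v = Orig u"
proof -
  consider (1) r ps cs where "(r, ps, cs) \<in> links" "r \<in> {TLOver, TLUnder, TRProd}"
      "\<pi> = [IV (Orig (ps ! 0)), IV (Orig (ps ! 1))]" "v = Orig (cs ! 0)"
    | (2) h where "h \<in> ps_hyps V links" "\<pi> = map ISym (hl h)" "v = Orig h"
    | (3) u l where "l \<in> links" "u \<in> set (aux_inputs l)" "\<pi> = expn u (fsort (lab u))" "v = Orig u"
    using assms unfolding aps_of_def by auto
  then show ?thesis
  proof cases
    case 1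
    then have "link_ok lab (r, ps, cs)" using link_wellformed by blast
    then show ?thesis using 1 that(1) by auto
  next
    case 2 then show ?thesis using that(2) set_hs by auto
  next
    case 3 then show ?thesis using that(3) by auto
  qed
qed

lemma aps0_tensor_cases:
  assumes "(k, v1, v2, v) \<in> a_tens aps0"
  obtains r a b cc where "(r, [a, b], [cc]) \<in> links" "v1 = Orig a" "v2 = Orig b" "v = Orig cc"
      "r = TLUp k \<and> lab a = DUp k (lab cc) (lab b) \<or> r = TLDown k \<and> lab b = DDown k (lab a) (lab cc)
       \<or> r = TRWrap k \<and> lab cc = DWrap k (lab a) (lab b)"
proof -
  obtain r ps cs where 1: "(r, ps, cs) \<in> links" "r = TLUp k \<or> r = TLDown k \<or> r = TRWrap k"
      "v1 = Orig (ps ! 0)" "v2 = Orig (ps ! 1)" "v = Orig (cs ! 0)"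
    using assms unfolding aps_of_def by auto
  then have "link_ok lab (r, ps, cs)" using link_wellformed by blast
  then show ?thesis using 1 that by auto
qed

lemma aps0_par_link: "p \<in> a_pars aps0 \<Longrightarrow> \<exists>l\<in>links. is_par (fst l) \<and> p = par_of lab l"
  unfolding aps_of_def by (simp del: par_of.simps) (metis fst_conv)

lemma aps0_par_cases:
  assumes "p \<in> a_pars aps0"
  obtains (prod) cc a b where "p = LProdL (Orig cc) (expn a (fsort (lab a))) (expn b (fsort (lab b)))"
      "(PLProd, [cc], [a, b]) \<in> links" "lab cc = DProd (lab a) (lab b)"
  | (wrap) k cc a b where "p = LWrapL k (Orig cc) (expn a (fsort (lab a))) (expn b (fsort (lab b)))"
      "(PLWrap k, [cc], [a, b]) \<in> links" "lab cc = DWrap k (lab a) (lab b)"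
  | (over) cc m b where "p = ROverL (Orig cc) (Orig m) (expn b (fsort (lab b)))"
      "(PROver, [cc], [m, b]) \<in> links" "lab m = DOver (lab cc) (lab b)"
  | (under) cc a m where "p = RUnderL (Orig cc) (expn a (fsort (lab a))) (Orig m)"
      "(PRUnder, [cc], [a, m]) \<in> links" "lab m = DUnder (lab a) (lab cc)"
  | (up) k cc m b where "p = RUpL k (Orig cc) (Orig m) (expn b (fsort (lab b)))"
      "(PRUp k, [cc], [m, b]) \<in> links" "lab m = DUp k (lab cc) (lab b)"
  | (down) k cc a m where "p = RDownL k (Orig cc) (expn a (fsort (lab a))) (Orig m)"
      "(PRDown k, [cc], [a, m]) \<in> links" "lab m = DDown k (lab a) (lab cc)"
proof -
  obtain r ps cs where 1: "(r, ps, cs) \<in> links" "is_par r" "p = par_of lab (r, ps, cs)"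
    using aps0_par_link[OF assms] by auto
  then have "link_ok lab (r, ps, cs)" using link_wellformed by blast
  then show ?thesis using 1 that by (cases r) (auto simp: Let_def)
qed

lemma right_par_main_par_of:
  assumes "l \<in> links" "is_par (fst l)" "right_par_main (par_of lab l) = Some v"
  shows "\<exists>x. v = Orig x \<and> x \<in> set (snd (snd l)) \<and> x \<notin> set (aux_inputs l)"
proof -
  obtain r ps cs where l: "l = (r, ps, cs)" by (cases l)
  then have "link_ok lab (r, ps, cs)" "distinct (ps @ cs)" using link_wellformed assms(1) by blast+
  then show ?thesis using assms l by (cases r) (auto simp: Let_def)
qed

lemma left_par_premiss_par_of:
  assumes "l \<in> links" "is_par (fst l)" "left_par_premiss (par_of lab l) = Some v"
  shows "\<exists>x. v = Orig x \<and> x \<in> set (fst (snd l))"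
proof -
  obtain r ps cs where l: "l = (r, ps, cs)" by (cases l)
  then have "link_ok lab (r, ps, cs)" using link_wellformed assms(1) by blast
  then show ?thesis using assms l by (cases r) (auto simp: Let_def)
qed

lemma aps0_right_par_main_unique:
  "p1 \<in> a_pars aps0 \<Longrightarrow> p2 \<in> a_pars aps0 \<Longrightarrow> right_par_main p1 = Some v \<Longrightarrow> right_par_main p2 = Some v
    \<Longrightarrow> p1 = p2"
  by (metis link_of_concl_unique option.inject avtx.inject(1) right_par_main_par_of aps0_par_link)

lemma aps0_left_par_premiss_unique:
  "p1 \<in> a_pars aps0 \<Longrightarrow> p2 \<in> a_pars aps0 \<Longrightarrow> left_par_premiss p1 = Some v \<Longrightarrow> left_par_premiss p2 = Some v
    \<Longrightarrow> p1 = p2"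
  by (metis link_of_premiss_unique avtx.inject(1) left_par_premiss_par_of aps0_par_link)

lemma aps0_tensor_concl_unique:
  assumes "(k1, a1, b1, v) \<in> a_tens aps0" "(k2, a2, b2, v) \<in> a_tens aps0"
  shows "(k1, a1, b1) = (k2, a2, b2)"
proof -
  obtain r a b cc where 1: "(r, [a, b], [cc]) \<in> links" "a1 = Orig a" "b1 = Orig b" "v = Orig cc"
      "r = TLUp k1 \<or> r = TLDown k1 \<or> r = TRWrap k1"
    using aps0_tensor_cases[OF assms(1)] by metis
  obtain r' a' b' cc' where 2: "(r', [a', b'], [cc']) \<in> links" "a2 = Orig a'" "b2 = Orig b'" "v = Orig cc'"
      "r' = TLUp k2 \<or> r' = TLDown k2 \<or> r' = TRWrap k2"
    using aps0_tensor_cases[OF assms(2)] by metis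
  have "(r, [a, b], [cc]) = (r', [a', b'], [cc'])"
    using link_of_concl_unique[OF 1(1) 2(1)] 1(4) 2(4) by simp
  then show ?thesis using 1 2 by auto
qed

lemma aps0_tensor_concl_not_right_par_main:
  assumes "(k, a1, b1, v) \<in> a_tens aps0" "p \<in> a_pars aps0"
  shows "right_par_main p \<noteq> Some v"
proof
  assume main: "right_par_main p = Some v"
  obtain r a b cc where 1: "(r, [a, b], [cc]) \<in> links" "v = Orig cc"
      "r = TLUp k \<or> r = TLDown k \<or> r = TRWrap k"
    using aps0_tensor_cases[OF assms(1)] by metis
  obtain l where l: "l \<in> links" "is_par (fst l)" "p = par_of lab l" using aps0_par_link assms(2) by blast
  then obtain x where "v = Orig x" "x \<in> set (snd (snd l))" using right_par_main_par_of main by blast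
  then have "l = (r, [a, b], [cc])" using link_of_concl_unique[OF l(1) 1(1)] 1(2) by simp
  then show False using l(2) 1(3) by auto
qed

lemma aps0_comb_concl_unique:
  assumes c1: "(\<pi>1, v) \<in> a_combs aps0" and c2: "(\<pi>2, v) \<in> a_combs aps0"
  shows "\<pi>1 = \<pi>2"
  using c1
proof (cases rule: aps0_comb_cases)
  case (tens r a b cc)
  show ?thesis using c2
  proof (cases rule: aps0_comb_cases)
    case (tens r' a' b' cc')
    then show ?thesis using link_of_concl_unique[OF \<open>(r, [a, b], [cc]) \<in> links\<close> \<open>(r', [a', b'], [cc']) \<in> links\<close>]
      \<open>v = Orig cc\<close> \<open>\<pi>1 = _\<close> by auto
  next
    case (hyp h) then show ?thesis using tens hyp_in_V_not_concl by fastforce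
  next
    case (aux u l)
    then have "u \<in> set (snd (snd l))" "is_par (fst l)" using aux_input_concl by auto
    then have "l = (r, [a, b], [cc])" using link_of_concl_unique[OF aux(1) tens(1)] aux tens by auto
    then show ?thesis using tens(4) \<open>is_par (fst l)\<close> by auto
  qed
next
  case (hyp h)
  show ?thesis using c2
  proof (cases rule: aps0_comb_cases)
    case (tens r' a' b' cc') then show ?thesis using hyp hyp_in_V_not_concl by fastforce
  next
    case (hyp h') then show ?thesis using \<open>\<pi>1 = _\<close> \<open>v = Orig h\<close> by auto
  next
    case (aux u l) then show ?thesis using hyp hyp_in_V_not_concl aux_input_concl by fastforce
  qed
next
  case (aux u l)
  show ?thesis using c2
  proof (cases rule: aps0_comb_cases)
    case (tens r a b cc)
    have "u \<in> set (snd (snd l))" "is_par (fst l)" using aux aux_input_concl by auto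
    then have "l = (r, [a, b], [cc])" using link_of_concl_unique[OF aux(1) tens(1)] aux tens by auto
    then show ?thesis using tens(4) \<open>is_par (fst l)\<close> by auto
  next
    case (hyp h) then show ?thesis using aux hyp_in_V_not_concl aux_input_concl by fastforce
  next
    case (aux u' l') then show ?thesis using \<open>\<pi>1 = _\<close> \<open>v = Orig u\<close> by auto
  qed
qed

lemma aps0_comb_shape:
  assumes "(\<pi>, v) \<in> a_combs aps0"
  shows "(\<exists>r a b cc. (r, [a, b], [cc]) \<in> links \<and> comb_vars exp_var \<pi> = [] \<and> comb_origs \<pi> = [a, b] \<and> v = Orig cc)
    \<or> (\<exists>h. h \<in> set hs \<and> vars_of \<pi> = set (svars (hl h)) \<and> comb_origs \<pi> = [] \<and> v = Orig h)
    \<or> (\<exists>u. vars_of \<pi> = judg_vars (aux_hyp u) \<and> comb_origs \<pi> = [] \<and> v = Orig u)"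
  using assms
proof (cases rule: aps0_comb_cases)
  case (tens r a b cc) then show ?thesis by auto
next
  case (hyp h) then show ?thesis by auto
next
  case (aux u l) then show ?thesis using comb_vars_expn_aux by auto
qed

lemma aps0_combs_disjoint:
  assumes c1: "(\<pi>1, v1) \<in> a_combs aps0" and c2: "(\<pi>2, v2) \<in> a_combs aps0" and ne: "(\<pi>1, v1) \<noteq> (\<pi>2, v2)"
  shows "v1 \<noteq> v2 \<and> vars_of \<pi>1 \<inter> vars_of \<pi>2 = {} \<and> set (comb_origs \<pi>1) \<inter> set (comb_origs \<pi>2) = {}"
proof -
  have vne: "v1 \<noteq> v2" using aps0_comb_concl_unique c1 c2 ne by blast
  have hv: "h \<in> set hs \<Longrightarrow> set (svars (hl h)) \<subseteq> hyp_vars" for h by (auto simp: hyp_vars_def)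
  show ?thesis
    using aps0_comb_shape[OF c1] aps0_comb_shape[OF c2]
  proof (elim disjE exE conjE)
    fix r a b cc r' a' b' cc'
    assume l1: "(r, [a, b], [cc]) \<in> links" and l2: "(r', [a', b'], [cc']) \<in> links"
      and o: "comb_origs \<pi>1 = [a, b]" "comb_origs \<pi>2 = [a', b']" "v1 = Orig cc" "v2 = Orig cc'" "comb_vars exp_var \<pi>1 = []"
    have "set [a, b] \<inter> set [a', b'] = {}"
    proof (rule ccontr)
      assume "set [a, b] \<inter> set [a', b'] \<noteq> {}"
      then obtain x where "x \<in> set [a, b]" "x \<in> set [a', b']" by blast
      then have "(r, [a, b], [cc]) = (r', [a', b'], [cc'])" using link_of_premiss_unique[OF l1 l2] by auto
      then show False using vne o by auto
    qed
    then show ?thesis using vne o by auto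
  next
    fix h h' assume "h \<in> set hs" "h' \<in> set hs" "v1 = Orig h" "v2 = Orig h'"
      "vars_of \<pi>1 = set (svars (hl h))" "vars_of \<pi>2 = set (svars (hl h'))"
      "comb_origs \<pi>1 = []"
    then show ?thesis using vne hyp_labels_disjoint[of h h'] by auto
  next
    fix h u assume "h \<in> set hs" "vars_of \<pi>1 = set (svars (hl h))"
      "vars_of \<pi>2 = judg_vars (aux_hyp u)" "comb_origs \<pi>1 = []"
    then show ?thesis using vne hv[of h] hyp_vars_disjoint_aux_hyp[of u] by auto
  next
    fix h u assume "h \<in> set hs" "vars_of \<pi>2 = set (svars (hl h))"
      "vars_of \<pi>1 = judg_vars (aux_hyp u)" "comb_origs \<pi>1 = []"
    then show ?thesis using vne hv[of h] hyp_vars_disjoint_aux_hyp[of u] by auto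
  next
    fix u u' assume "vars_of \<pi>1 = judg_vars (aux_hyp u)" "vars_of \<pi>2 = judg_vars (aux_hyp u')"
      "comb_origs \<pi>1 = []" "v1 = Orig u" "v2 = Orig u'"
    then show ?thesis using vne aux_hyp_vars_disjoint[of u u'] by auto
  qed (use vne in auto)
qed

definition touches :: "judg \<Rightarrow> item list \<Rightarrow> bool" where
  "touches j xs \<longleftrightarrow> judg_vars j \<inter> vars_of xs \<noteq> {}"

definition open_hyps :: "item list \<Rightarrow> judg multiset" where
  "open_hyps xs = mset_set {j \<in> all_hyps. touches j xs}"

definition whole_hyps :: "item list \<Rightarrow> bool" where
  "whole_hyps xs \<longleftrightarrow> (\<forall>j\<in>all_hyps. touches j xs \<longrightarrow> judg_vars j \<subseteq> vars_of xs)"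

definition admissible :: "nat set \<Rightarrow> (nat \<Rightarrow> judg multiset \<times> str) \<Rightarrow> item list \<Rightarrow> bool" where
  "admissible Z f xs \<longleftrightarrow>
     (\<forall>n\<in>set (comb_origs xs). ND (fst (f n)) (snd (f n), lab n) \<and> ssort (snd (f n)) = fsort (lab n)
        \<and> cvars (fst (f n)) \<inter> (vars_of xs \<union> Z) = {})
   \<and> (\<forall>n1\<in>set (comb_origs xs). \<forall>n2\<in>set (comb_origs xs).
        n1 \<noteq> n2 \<longrightarrow> cvars (fst (f n1)) \<inter> cvars (fst (f n2)) = {})"

fun vertex_formula :: "avtx \<Rightarrow> formula" where
  "vertex_formula (Orig n) = lab n"
| "vertex_formula (Exp u j) = undefined"

definition derivable :: "nat set \<Rightarrow> item list \<Rightarrow> avtx \<Rightarrow> bool" where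
  "derivable Z xs v \<longleftrightarrow>
     (\<forall>f. admissible Z f xs \<longrightarrow> ND (open_hyps xs + plug_ctx f xs) (comb_str f xs, vertex_formula v))"

lemma open_hyps_no_vars: "comb_vars exp_var xs = [] \<Longrightarrow> open_hyps xs = {#}"
  by (simp add: open_hyps_def touches_def)

lemma whole_hyps_no_vars: "comb_vars exp_var xs = [] \<Longrightarrow> whole_hyps xs"
  by (simp add: whole_hyps_def touches_def)

lemma cvars_open_hyps: "whole_hyps xs \<Longrightarrow> cvars (open_hyps xs) \<subseteq> vars_of xs"
  using finite_all_hyps by (auto simp: open_hyps_def cvars_mset_set whole_hyps_def)

lemma touching_hyps_single:
  assumes "j0 \<in> all_hyps" "vars_of xs = judg_vars j0"
  shows "{j\<in>all_hyps. touches j xs} = {j0}"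
proof -
  have "j \<in> all_hyps \<Longrightarrow> touches j xs \<Longrightarrow> j = j0" for j
    using all_hyps_vars_disjoint[OF _ assms(1), of j] assms(2) unfolding touches_def by blast
  moreover have "touches j0 xs" using assms all_hyps_vars_nonempty[OF assms(1)] by (simp add: touches_def)
  ultimately show ?thesis using assms(1) by blast
qed

lemma single_hyp:
  assumes "j0 \<in> all_hyps" "vars_of xs = judg_vars j0"
  shows "open_hyps xs = {#j0#}" and "whole_hyps xs"
  using touching_hyps_single[OF assms] assms(2)
  by (auto simp: open_hyps_def whole_hyps_def)

lemma open_hyps_union:
  assumes "vars_of xs = vars_of ys \<union> vars_of zs" "vars_of ys \<inter> vars_of zs = {}"
    and "whole_hyps ys" "whole_hyps zs"
  shows "open_hyps xs = open_hyps ys + open_hyps zs"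
proof -
  have "{j\<in>all_hyps. touches j xs} = {j\<in>all_hyps. touches j ys} \<union> {j\<in>all_hyps. touches j zs}"
    using assms(1) by (auto simp: touches_def)
  moreover have "{j\<in>all_hyps. touches j ys} \<inter> {j\<in>all_hyps. touches j zs} = {}"
    using assms(2-4) by (auto simp: touches_def whole_hyps_def)
  ultimately show ?thesis using finite_all_hyps by (simp add: open_hyps_def mset_set_Union)
qed

lemma whole_hyps_union:
  "vars_of xs = vars_of ys \<union> vars_of zs \<Longrightarrow> whole_hyps ys \<Longrightarrow> whole_hyps zs \<Longrightarrow> whole_hyps xs"
  by (auto simp: whole_hyps_def touches_def)

lemma whole_hyps_remove_aux:
  assumes "u \<in> aux_vertices" "whole_hyps xs" "vars_of xs = judg_vars (aux_hyp u) \<union> vars_of ys"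
    "judg_vars (aux_hyp u) \<inter> vars_of ys = {}"
  shows "whole_hyps ys"
  unfolding whole_hyps_def
proof (intro ballI impI)
  fix j assume j: "j \<in> all_hyps" "touches j ys"
  then have "touches j xs" "j \<noteq> aux_hyp u" using assms(3,4) by (auto simp: touches_def)
  moreover have "judg_vars j \<inter> judg_vars (aux_hyp u) = {}" if "j \<noteq> aux_hyp u"
    using all_hyps_vars_disjoint[OF j(1) aux_hyp_in_all_hyps[OF assms(1)] that] .
  ultimately show "judg_vars j \<subseteq> vars_of ys" using assms(2,3) j(1) by (auto simp: whole_hyps_def)
qed

lemma open_hyps_add_aux:
  assumes "u \<in> aux_vertices" "whole_hyps ys" "vars_of xs = judg_vars (aux_hyp u) \<union> vars_of ys"
    "judg_vars (aux_hyp u) \<inter> vars_of ys = {}"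
  shows "open_hyps xs = add_mset (aux_hyp u) (open_hyps ys)"
proof -
  let ?e = "expn u (fsort (lab u))"
  note e = single_hyp[OF aux_hyp_in_all_hyps[OF assms(1)] comb_vars_expn_aux]
  have "open_hyps xs = open_hyps ?e + open_hyps ys"
    by (rule open_hyps_union) (use assms e comb_vars_expn_aux in auto)
  then show ?thesis using e by simp
qed

lemma admissible_ND: "admissible Z f xs \<Longrightarrow> n \<in> set (comb_origs xs) \<Longrightarrow> ND (fst (f n)) (snd (f n), lab n)"
  and admissible_cvars:
    "admissible Z f xs \<Longrightarrow> n \<in> set (comb_origs xs) \<Longrightarrow> cvars (fst (f n)) \<inter> (vars_of xs \<union> Z) = {}"
  and admissible_disjoint: "admissible Z f xs \<Longrightarrow> n1 \<in> set (comb_origs xs) \<Longrightarrow> n2 \<in> set (comb_origs xs)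
    \<Longrightarrow> n1 \<noteq> n2 \<Longrightarrow> cvars (fst (f n1)) \<inter> cvars (fst (f n2)) = {}"
  by (simp_all add: admissible_def)

lemma admissible_mono:
  assumes "admissible Z' f xs" "Z \<subseteq> Z'" "set (comb_origs ys) \<subseteq> set (comb_origs xs)"
    "vars_of ys \<subseteq> vars_of xs \<union> Z'"
  shows "admissible Z f ys"
  using assms unfolding admissible_def by blast

lemma admissible_ssort:
  "admissible Z f xs \<Longrightarrow> set (comb_origs ys) \<subseteq> set (comb_origs xs)
    \<Longrightarrow> ssort (comb_str f ys) = lsort (avsort lab) ys"
  by (rule ssort_comb_inst) (auto simp: admissible_def)

lemma cvars_plug_ctx_disjoint:
  "admissible Z f xs \<Longrightarrow> cvars (plug_ctx f xs) \<inter> (vars_of xs \<union> Z) = {}"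
  by (auto simp: cvars_plug_ctx dest: admissible_cvars)

lemma derivable_mono: "derivable Z xs v \<Longrightarrow> Z \<subseteq> Z' \<Longrightarrow> derivable Z' xs v"
  unfolding derivable_def using admissible_mono[of Z' _ xs Z xs] by blast

lemma derivableD:
  assumes "derivable Z xs v" "admissible Z f zs" "set (comb_origs xs) \<subseteq> set (comb_origs zs)"
    "vars_of xs \<subseteq> vars_of zs \<union> Z"
  shows "ND (open_hyps xs + plug_ctx f xs) (comb_str f xs, vertex_formula v)"
  using assms admissible_mono[of Z f zs Z xs] unfolding derivable_def by blast

lemma contexts_disjoint:
  assumes adm: "admissible Z f zs"
    and sub: "set (comb_origs xs) \<union> set (comb_origs ys) \<subseteq> set (comb_origs zs)"
      "vars_of xs \<union> vars_of ys \<subseteq> vars_of zs"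
    and disj: "set (comb_origs xs) \<inter> set (comb_origs ys) = {}" "vars_of xs \<inter> vars_of ys = {}"
    and whole: "whole_hyps xs" "whole_hyps ys"
  shows "cvars (open_hyps xs + plug_ctx f xs) \<inter> cvars (open_hyps ys + plug_ctx f ys) = {}"
proof -
  have "cvars (plug_ctx f xs) \<inter> vars_of zs = {}" "cvars (plug_ctx f ys) \<inter> vars_of zs = {}"
    using admissible_cvars[OF adm] sub(1) by (fastforce simp: cvars_plug_ctx)+
  moreover have "cvars (plug_ctx f xs) \<inter> cvars (plug_ctx f ys) = {}"
    using admissible_disjoint[OF adm] sub(1) disj(1) by (fastforce simp: cvars_plug_ctx)
  ultimately show ?thesis using cvars_open_hyps[OF whole(1)] cvars_open_hyps[OF whole(2)] sub(2) disj(2)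
    by auto
qed

section \<open>The invariant\<close>

definition unused_vars :: "aps \<Rightarrow> nat set" where
  "unused_vars X = exp_vars - (\<Union>(\<pi>, v)\<in>a_combs X. vars_of \<pi>)"

definition comb_ok :: "aps \<Rightarrow> item list \<Rightarrow> avtx \<Rightarrow> bool" where
  "comb_ok X \<pi> v \<longleftrightarrow> (\<exists>n. v = Orig n) \<and> distinct (comb_vars exp_var \<pi>) \<and> distinct (comb_origs \<pi>)
     \<and> lsort (avsort lab) \<pi> = avsort lab v \<and> (\<forall>p. ISym (SVar p) \<in> set \<pi> \<longrightarrow> p \<in> hyp_vars)
     \<and> whole_hyps \<pi> \<and> derivable (unused_vars X) \<pi> v"

definition invariant :: "aps \<Rightarrow> bool" where
  "invariant X \<longleftrightarrow> a_tens X \<subseteq> a_tens aps0 \<and> a_pars X \<subseteq> a_pars aps0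
   \<and> (\<forall>\<pi> v. (\<pi>, v) \<in> a_combs X \<longrightarrow> comb_ok X \<pi> v)
   \<and> (\<forall>\<pi>1 v1 \<pi>2 v2. (\<pi>1, v1) \<in> a_combs X \<longrightarrow> (\<pi>2, v2) \<in> a_combs X \<longrightarrow> (\<pi>1, v1) \<noteq> (\<pi>2, v2) \<longrightarrow>
       v1 \<noteq> v2 \<and> vars_of \<pi>1 \<inter> vars_of \<pi>2 = {} \<and> set (comb_origs \<pi>1) \<inter> set (comb_origs \<pi>2) = {})
   \<and> (\<forall>p\<in>a_pars X. \<forall>v1. left_par_premiss p = Some v1 \<longrightarrow> (\<forall>\<pi> v. (\<pi>, v) \<in> a_combs X \<longrightarrow> IV v1 \<notin> set \<pi>))
   \<and> (\<forall>k v1 v2 v. (k, v1, v2, v) \<in> a_tens X \<longrightarrow> v \<notin> snd ` a_combs X)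
   \<and> (\<forall>p\<in>a_pars X. \<forall>v. right_par_main p = Some v \<longrightarrow> v \<notin> snd ` a_combs X)
   \<and> hyp_vars \<subseteq> (\<Union>(\<pi>, v)\<in>a_combs X. vars_of \<pi>)"

lemma comb_okD:
  assumes "comb_ok X \<pi> v"
  shows "\<exists>n. v = Orig n" "distinct (comb_vars exp_var \<pi>)" "distinct (comb_origs \<pi>)"
    "lsort (avsort lab) \<pi> = avsort lab v" "\<And>p. ISym (SVar p) \<in> set \<pi> \<Longrightarrow> p \<in> hyp_vars"
    "whole_hyps \<pi>" "derivable (unused_vars X) \<pi> v"
  using assms unfolding comb_ok_def by auto

lemma comb_okI:
  assumes "\<exists>n. v = Orig n" "distinct (comb_vars exp_var \<pi>)" "distinct (comb_origs \<pi>)"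
    "lsort (avsort lab) \<pi> = avsort lab v" "\<And>p. ISym (SVar p) \<in> set \<pi> \<Longrightarrow> p \<in> hyp_vars"
    "whole_hyps \<pi>" "derivable (unused_vars X) \<pi> v"
  shows "comb_ok X \<pi> v"
  using assms unfolding comb_ok_def by auto

lemma comb_ok_mono: "comb_ok X \<pi> v \<Longrightarrow> unused_vars X \<subseteq> unused_vars X' \<Longrightarrow> comb_ok X' \<pi> v"
  unfolding comb_ok_def using derivable_mono by blast

lemma invariantD:
  assumes "invariant X"
  shows "a_tens X \<subseteq> a_tens aps0" "a_pars X \<subseteq> a_pars aps0"
    "\<And>\<pi> v. (\<pi>, v) \<in> a_combs X \<Longrightarrow> comb_ok X \<pi> v"
    "\<And>\<pi>1 v1 \<pi>2 v2. (\<pi>1, v1) \<in> a_combs X \<Longrightarrow> (\<pi>2, v2) \<in> a_combs X \<Longrightarrow> (\<pi>1, v1) \<noteq> (\<pi>2, v2) \<Longrightarrow>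
       v1 \<noteq> v2 \<and> vars_of \<pi>1 \<inter> vars_of \<pi>2 = {} \<and> set (comb_origs \<pi>1) \<inter> set (comb_origs \<pi>2) = {}"
    "\<And>p v1 \<pi> v. p \<in> a_pars X \<Longrightarrow> left_par_premiss p = Some v1 \<Longrightarrow> (\<pi>, v) \<in> a_combs X \<Longrightarrow> IV v1 \<notin> set \<pi>"
    "\<And>k v1 v2 v. (k, v1, v2, v) \<in> a_tens X \<Longrightarrow> v \<notin> snd ` a_combs X"
    "\<And>p v. p \<in> a_pars X \<Longrightarrow> right_par_main p = Some v \<Longrightarrow> v \<notin> snd ` a_combs X"
    "hyp_vars \<subseteq> (\<Union>(\<pi>, v)\<in>a_combs X. vars_of \<pi>)"
  using assms unfolding invariant_def by (elim conjE; blast)+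

lemma aps0_comb_derivable:
  assumes "(\<pi>, v) \<in> a_combs aps0"
  shows "derivable Z \<pi> v"
  using assms
proof (cases rule: aps0_comb_cases)
  case (tens r a b cc)
  show ?thesis unfolding derivable_def
  proof (intro allI impI)
    fix f assume adm: "admissible Z f \<pi>"
    have Da: "ND (fst (f a)) (snd (f a), lab a)" and Db: "ND (fst (f b)) (snd (f b), lab b)"
      using admissible_ND[OF adm] tens(2) by auto
    have "a \<noteq> b" using link_wellformed[OF tens(1)] by auto
    then have dj: "cvars (fst (f a)) \<inter> cvars (fst (f b)) = {}"
      using admissible_disjoint[OF adm, of a b] tens(2) by auto
    have "ND (fst (f a) + fst (f b)) (snd (f a) @ snd (f b), lab cc)"
      using tens(4)
    proof (elim disjE conjE)
      assume "lab a = DOver (lab cc) (lab b)"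
      then show ?thesis using ND.overE[OF _ Db dj, of "snd (f a)" "lab cc"] Da by simp
    next
      assume "lab b = DUnder (lab a) (lab cc)"
      then show ?thesis using ND.underE[OF Da _ dj, of "snd (f b)" "lab cc"] Db by simp
    next
      assume "lab cc = DProd (lab a) (lab b)"
      then show ?thesis using ND.prodI[OF Da Db dj] by simp
    qed
    then show "ND (open_hyps \<pi> + plug_ctx f \<pi>) (comb_str f \<pi>, vertex_formula v)"
      using tens(2,3) by (simp add: open_hyps_no_vars)
  qed
next
  case (hyp h)
  have "open_hyps \<pi> = {#(hl h, lab h)#}"
    using single_hyp(1)[OF hyp_judg_in_all_hyps[OF hyp(1)]] hyp by simp
  moreover have "ND {#(hl h, lab h)#} (hl h, lab h)"
    using ND.hyp hyp_labels hyp(1) wf_lab hyp_in_V_not_concl by blast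
  ultimately show ?thesis using hyp by (simp add: derivable_def plug_ctx_def)
next
  case (aux u l)
  have "open_hyps \<pi> = {#aux_hyp u#}"
    using single_hyp(1)[OF aux_hyp_in_all_hyps comb_vars_expn_aux] aux aux_verticesI by simp
  moreover have "ND {#aux_hyp u#} (fst (aux_hyp u), lab u)"
    using ND_aux_hyp aux_input_in_V aux by blast
  ultimately show ?thesis
    using aux by (simp add: derivable_def comb_str_expn_aux plug_ctx_no_origs)
qed

lemma aps0_comb_ok:
  assumes "(\<pi>, v) \<in> a_combs aps0"
  shows "comb_ok aps0 \<pi> v"
  using assms
proof (cases rule: aps0_comb_cases)
  case (tens r a b cc)
  have "distinct [a, b, cc]" "wf (lab a)" "wf (lab b)" "wf (lab cc)"
    using link_wellformed[OF tens(1)] wf_lab by auto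
  then show ?thesis
    using tens aps0_comb_derivable[OF assms] by (auto intro!: comb_okI whole_hyps_no_vars)
next
  case (hyp h)
  then show ?thesis
    using hyp_label_props[OF hyp(1)] single_hyp(2)[OF hyp_judg_in_all_hyps[OF hyp(1)]]
      aps0_comb_derivable[OF assms]
    by (auto intro!: comb_okI simp: hyp_vars_def in_set_svars_iff)
next
  case (aux u l)
  then have "whole_hyps \<pi>"
    using single_hyp(2)[OF aux_hyp_in_all_hyps comb_vars_expn_aux] aux_verticesI by blast
  then show ?thesis
    using aux aps0_comb_derivable[OF assms]
    by (auto intro!: comb_okI simp: comb_vars_expn distinct_map inj_on_def exp_var_eq_iff
        simp del: upt_Suc)
qed

lemma aps0_comb_concl_link:
  assumes "(\<pi>, Orig x) \<in> a_combs aps0" "l \<in> links" "x \<in> set (snd (snd l))"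
  shows "fst l \<in> {TLOver, TLUnder, TRProd} \<or> x \<in> set (aux_inputs l)"
  using assms(1)
proof (cases rule: aps0_comb_cases)
  case (tens r a b cc)
  then show ?thesis using link_of_concl_unique[OF assms(2) tens(1)] assms(3) by auto
next
  case (hyp h) then show ?thesis using assms hyp_in_V_not_concl by auto
next
  case (aux u l')
  then have "l = l'" using link_of_concl_unique[OF assms(2) aux(1)] aux_input_concl assms(3) by blast
  then show ?thesis using aux by simp
qed

lemma aps0_tensor_concl_not_comb_concl:
  assumes "(k, v1, v2, v) \<in> a_tens aps0"
  shows "v \<notin> snd ` a_combs aps0"
proof
  assume "v \<in> snd ` a_combs aps0"
  then obtain \<pi> where c: "(\<pi>, v) \<in> a_combs aps0" by auto
  obtain r a b cc where "(r, [a, b], [cc]) \<in> links" "v = Orig cc" "r = TLUp k \<or> r = TLDown k \<or> r = TRWrap k"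
    using aps0_tensor_cases[OF assms] by metis
  then show False using aps0_comb_concl_link[of \<pi> cc "(r, [a, b], [cc])"] c by auto
qed

lemma aps0_right_par_main_not_comb_concl:
  assumes "p \<in> a_pars aps0" "right_par_main p = Some v"
  shows "v \<notin> snd ` a_combs aps0"
proof
  assume "v \<in> snd ` a_combs aps0"
  then obtain \<pi> where c: "(\<pi>, v) \<in> a_combs aps0" by auto
  obtain l where l: "l \<in> links" "is_par (fst l)" "p = par_of lab l" using aps0_par_link assms(1) by blast
  then obtain x where "v = Orig x" "x \<in> set (snd (snd l))" "x \<notin> set (aux_inputs l)"
    using right_par_main_par_of assms(2) by blast
  then show False using aps0_comb_concl_link[of \<pi> x l] c l by (cases l) (auto elim: is_par.elims)
qed

lemma aps0_left_par_premiss_not_in_comb: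
  assumes "p \<in> a_pars aps0" "left_par_premiss p = Some v1" "(\<pi>, v) \<in> a_combs aps0"
  shows "IV v1 \<notin> set \<pi>"
proof -
  obtain l where l: "l \<in> links" "is_par (fst l)" "p = par_of lab l" using aps0_par_link assms(1) by blast
  then obtain x where x: "v1 = Orig x" "x \<in> set (fst (snd l))" using left_par_premiss_par_of assms(2) by blast
  show ?thesis using assms(3)
  proof (cases rule: aps0_comb_cases)
    case (tens r a b cc)
    show ?thesis
    proof
      assume "IV v1 \<in> set \<pi>"
      then have "l = (r, [a, b], [cc])" using link_of_premiss_unique[OF l(1) tens(1)] tens x by auto
      then show False using l(2) tens(4) by auto
    qed
  qed (use x in auto)
qed

lemma invariant_aps0: "invariant aps0"
proof -
  have "hyp_vars \<subseteq> (\<Union>(\<pi>, v)\<in>a_combs aps0. vars_of \<pi>)"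
  proof
    fix p assume "p \<in> hyp_vars"
    then obtain h where h: "h \<in> set hs" "p \<in> set (svars (hl h))" by (auto simp: hyp_vars_def)
    then have "(map ISym (hl h), Orig h) \<in> a_combs aps0" using set_hs unfolding aps_of_def by auto
    then show "p \<in> (\<Union>(\<pi>, v)\<in>a_combs aps0. vars_of \<pi>)" using h by force
  qed
  then show ?thesis
    unfolding invariant_def
    using aps0_comb_ok aps0_combs_disjoint aps0_left_par_premiss_not_in_comb
      aps0_tensor_concl_not_comb_concl aps0_right_par_main_not_comb_concl
    by blast
qed

lemma unused_vars_mono:
  assumes "a_combs X' = insert (\<pi>n, vn) (a_combs X - R)" "R \<subseteq> a_combs X"
    "vars_of \<pi>n \<subseteq> (\<Union>(\<pi>, v)\<in>R. vars_of \<pi>)"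
  shows "unused_vars X \<subseteq> unused_vars X'"
  using assms unfolding unused_vars_def by fastforce

lemma comb_vars_not_unused: "(\<pi>, v) \<in> a_combs X \<Longrightarrow> vars_of \<pi> \<inter> unused_vars X = {}"
  unfolding unused_vars_def by blast

lemma aux_hyp_vars_unused:
  assumes I: "invariant X" and c: "(\<pi>o, vo) \<in> a_combs X"
    and old: "judg_vars (aux_hyp a) \<subseteq> vars_of \<pi>o"
    and new: "judg_vars (aux_hyp a) \<inter> vars_of \<pi>n = {}"
    and C: "a_combs X' = insert (\<pi>n, v) (a_combs X - {(\<pi>o, vo)})"
  shows "judg_vars (aux_hyp a) \<subseteq> unused_vars X'"
proof
  fix x assume x: "x \<in> judg_vars (aux_hyp a)"
  have "x \<notin> vars_of \<pi>" if "(\<pi>, w) \<in> a_combs X'" for \<pi> w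
  proof (cases "(\<pi>, w) = (\<pi>n, v)")
    case True then show ?thesis using x new by auto
  next
    case False
    then have "(\<pi>, w) \<in> a_combs X" "(\<pi>, w) \<noteq> (\<pi>o, vo)" using that C by auto
    then show ?thesis using invariantD(4)[OF I c, of \<pi> w] x old by auto
  qed
  then show "x \<in> unused_vars X'"
    using x aux_hyp_vars_subset unfolding unused_vars_def by blast
qed

lemma replace_combs_disjoint:
  assumes I: "invariant X"
    and C: "a_combs X' = insert (\<pi>n, vn) (a_combs X - R)" and R: "R \<subseteq> a_combs X"
    and vars: "vars_of \<pi>n \<subseteq> (\<Union>(\<pi>, v)\<in>R. vars_of \<pi>)"
    and origs: "\<And>\<pi> v. (\<pi>, v) \<in> a_combs X - R \<Longrightarrow> set (comb_origs \<pi>n) \<inter> set (comb_origs \<pi>) = {}"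
    and concl: "vn \<in> snd ` R \<or> vn \<notin> snd ` a_combs X"
    and c1: "(\<pi>1, v1) \<in> a_combs X'" and c2: "(\<pi>2, v2) \<in> a_combs X'" and ne: "(\<pi>1, v1) \<noteq> (\<pi>2, v2)"
  shows "v1 \<noteq> v2 \<and> vars_of \<pi>1 \<inter> vars_of \<pi>2 = {} \<and> set (comb_origs \<pi>1) \<inter> set (comb_origs \<pi>2) = {}"
proof -
  have new_old: "vn \<noteq> v \<and> vars_of \<pi>n \<inter> vars_of \<pi> = {} \<and> set (comb_origs \<pi>n) \<inter> set (comb_origs \<pi>) = {}"
    if o: "(\<pi>, v) \<in> a_combs X - R" for \<pi> v
  proof (intro conjI)
    show "vn \<noteq> v"
    proof
      assume "vn = v"
      then obtain \<pi>r where "(\<pi>r, vn) \<in> R" using concl o by force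
      then show False using invariantD(4)[OF I, of \<pi>r vn \<pi> v] o R \<open>vn = v\<close> by auto
    qed
    show "vars_of \<pi>n \<inter> vars_of \<pi> = {}"
    proof (rule ccontr)
      assume "vars_of \<pi>n \<inter> vars_of \<pi> \<noteq> {}"
      then obtain x \<pi>r vr where "(\<pi>r, vr) \<in> R" "x \<in> vars_of \<pi>r" "x \<in> vars_of \<pi>" using vars by blast
      then show False using invariantD(4)[OF I, of \<pi>r vr \<pi> v] o R by auto
    qed
  qed (use origs o in blast)
  consider "(\<pi>1, v1) = (\<pi>n, vn)" "(\<pi>2, v2) \<in> a_combs X - R"
    | "(\<pi>2, v2) = (\<pi>n, vn)" "(\<pi>1, v1) \<in> a_combs X - R"
    | "(\<pi>1, v1) \<in> a_combs X" "(\<pi>2, v2) \<in> a_combs X"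
    using c1 c2 ne C by auto
  then show ?thesis
  proof cases
    case 1 then show ?thesis using new_old by auto
  next
    case 2 then show ?thesis using new_old by auto
  next
    case 3 then show ?thesis using invariantD(4)[OF I] ne by blast
  qed
qed

lemma invariant_replace_combs:
  assumes I: "invariant X"
    and C: "a_combs X' = insert (\<pi>n, vn) (a_combs X - R)" and R: "R \<subseteq> a_combs X"
    and T: "a_tens X' \<subseteq> a_tens X" and P: "a_pars X' \<subseteq> a_pars X"
    and ok: "comb_ok X' \<pi>n vn"
    and vars: "vars_of \<pi>n \<subseteq> (\<Union>(\<pi>, v)\<in>R. vars_of \<pi>)"
    and hyp_vars: "hyp_vars \<inter> (\<Union>(\<pi>, v)\<in>R. vars_of \<pi>) \<subseteq> vars_of \<pi>n"
    and origs: "\<And>\<pi> v. (\<pi>, v) \<in> a_combs X - R \<Longrightarrow> set (comb_origs \<pi>n) \<inter> set (comb_origs \<pi>) = {}"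
    and concl: "vn \<in> snd ` R \<or> vn \<notin> snd ` a_combs X"
    and left: "\<And>p v1. p \<in> a_pars X' \<Longrightarrow> left_par_premiss p = Some v1 \<Longrightarrow> IV v1 \<notin> set \<pi>n"
    and tens: "\<And>k v1 v2. (k, v1, v2, vn) \<notin> a_tens X'"
    and right: "\<And>p. p \<in> a_pars X' \<Longrightarrow> right_par_main p \<noteq> Some vn"
  shows "invariant X'"
proof -
  have "unused_vars X \<subseteq> unused_vars X'" by (rule unused_vars_mono[OF C R vars])
  then have oks: "\<forall>\<pi> v. (\<pi>, v) \<in> a_combs X' \<longrightarrow> comb_ok X' \<pi> v"
    using C ok comb_ok_mono[OF invariantD(3)[OF I]] by auto
  have disj: "\<forall>\<pi>1 v1 \<pi>2 v2. (\<pi>1, v1) \<in> a_combs X' \<longrightarrow> (\<pi>2, v2) \<in> a_combs X' \<longrightarrow> (\<pi>1, v1) \<noteq> (\<pi>2, v2) \<longrightarrow>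
       v1 \<noteq> v2 \<and> vars_of \<pi>1 \<inter> vars_of \<pi>2 = {} \<and> set (comb_origs \<pi>1) \<inter> set (comb_origs \<pi>2) = {}"
    by (intro allI impI) (rule replace_combs_disjoint[OF I C R vars origs concl])
  have lefts: "\<forall>p\<in>a_pars X'. \<forall>v1. left_par_premiss p = Some v1 \<longrightarrow> (\<forall>\<pi> v. (\<pi>, v) \<in> a_combs X' \<longrightarrow> IV v1 \<notin> set \<pi>)"
  proof (intro ballI allI impI)
    fix p v1 \<pi> v assume p: "p \<in> a_pars X'" "left_par_premiss p = Some v1" and c: "(\<pi>, v) \<in> a_combs X'"
    show "IV v1 \<notin> set \<pi>"
    proof (cases "(\<pi>, v) = (\<pi>n, vn)")
      case True then show ?thesis using left[OF p] by simp
    next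
      case False
      then have "(\<pi>, v) \<in> a_combs X" using c C by auto
      then show ?thesis using invariantD(5)[OF I] p P by blast
    qed
  qed
  have tenss: "\<forall>k v1 v2 v. (k, v1, v2, v) \<in> a_tens X' \<longrightarrow> v \<notin> snd ` a_combs X'"
  proof (intro allI impI)
    fix k v1 v2 v assume t: "(k, v1, v2, v) \<in> a_tens X'"
    then have "v \<notin> snd ` a_combs X" "v \<noteq> vn" using T invariantD(6)[OF I] tens by blast+
    then show "v \<notin> snd ` a_combs X'" using C by auto
  qed
  have rights: "\<forall>p\<in>a_pars X'. \<forall>v. right_par_main p = Some v \<longrightarrow> v \<notin> snd ` a_combs X'"
  proof (intro ballI allI impI)
    fix p v assume p: "p \<in> a_pars X'" "right_par_main p = Some v"
    then have "v \<notin> snd ` a_combs X" "v \<noteq> vn" using P invariantD(7)[OF I] right by blast+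
    then show "v \<notin> snd ` a_combs X'" using C by auto
  qed
  have hyps: "hyp_vars \<subseteq> (\<Union>(\<pi>, v)\<in>a_combs X'. vars_of \<pi>)"
  proof
    fix x assume x: "x \<in> hyp_vars"
    then obtain \<pi> v where pv: "(\<pi>, v) \<in> a_combs X" "x \<in> vars_of \<pi>" using invariantD(8)[OF I] by blast
    show "x \<in> (\<Union>(\<pi>, v)\<in>a_combs X'. vars_of \<pi>)"
    proof (cases "(\<pi>, v) \<in> R")
      case True
      then have "x \<in> vars_of \<pi>n" using hyp_vars x pv by blast
      then show ?thesis using C by force
    next
      case False then show ?thesis using C pv by force
    qed
  qed
  have "a_tens X' \<subseteq> a_tens aps0" "a_pars X' \<subseteq> a_pars aps0" using T P invariantD(1,2)[OF I] by auto
  then show ?thesis unfolding invariant_def using oks disj lefts tenss rights hyps by (intro conjI)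
qed

lemma invariant_right_par_step:
  assumes I: "invariant X" and p: "p \<in> a_pars X" and rm: "right_par_main p = Some v"
    and co: "(\<pi>o, vo) \<in> a_combs X"
    and C: "a_combs X' = insert (\<pi>n, v) (a_combs X - {(\<pi>o, vo)})"
    and T: "a_tens X' = a_tens X" and P: "a_pars X' = a_pars X - {p}"
    and ok: "comb_ok X' \<pi>n v"
    and vars: "vars_of \<pi>n \<subseteq> vars_of \<pi>o"
    and hvn: "hyp_vars \<inter> vars_of \<pi>o \<subseteq> vars_of \<pi>n"
    and ivs: "\<And>x. IV x \<in> set \<pi>n \<Longrightarrow> IV x \<in> set \<pi>o"
  shows "invariant X'"
proof (rule invariant_replace_combs[OF I C])
  show "{(\<pi>o, vo)} \<subseteq> a_combs X" using co by auto
  show "a_tens X' \<subseteq> a_tens X" "a_pars X' \<subseteq> a_pars X" using T P by auto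
  show "comb_ok X' \<pi>n v" by (rule ok)
  show "vars_of \<pi>n \<subseteq> (\<Union>(\<pi>, v)\<in>{(\<pi>o, vo)}. vars_of \<pi>)" using vars by auto
  show "hyp_vars \<inter> (\<Union>(\<pi>, v)\<in>{(\<pi>o, vo)}. vars_of \<pi>) \<subseteq> vars_of \<pi>n" using hvn by auto
  show "set (comb_origs \<pi>n) \<inter> set (comb_origs \<pi>) = {}" if "(\<pi>, v') \<in> a_combs X - {(\<pi>o, vo)}" for \<pi> v'
  proof -
    have "set (comb_origs \<pi>n) \<subseteq> set (comb_origs \<pi>o)" using ivs by (auto simp: in_set_comb_origs_iff)
    then show ?thesis using invariantD(4)[OF I co, of \<pi> v'] that by auto
  qed
  show "v \<in> snd ` {(\<pi>o, vo)} \<or> v \<notin> snd ` a_combs X" using invariantD(7)[OF I p rm] by blast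
  show "IV w \<notin> set \<pi>n" if "q \<in> a_pars X'" "left_par_premiss q = Some w" for q w
    using invariantD(5)[OF I, of q w \<pi>o vo] that co P ivs by blast
  show "(k, w1, w2, v) \<notin> a_tens X'" for k w1 w2
    using aps0_tensor_concl_not_right_par_main[of k w1 w2 v p] invariantD(1,2)[OF I] T p rm by blast
  show "right_par_main q \<noteq> Some v" if "q \<in> a_pars X'" for q
    using aps0_right_par_main_unique[of q p v] invariantD(2)[OF I] that P p rm by blast
qed

lemma invariant_left_par_step:
  assumes I: "invariant X" and p: "p \<in> a_pars X" and lp: "left_par_premiss p = Some (Orig cc)"
    and co: "(\<pi>o, vo) \<in> a_combs X"
    and C: "a_combs X' = insert (\<pi>n, vo) (a_combs X - {(\<pi>o, vo)})"
    and T: "a_tens X' = a_tens X" and P: "a_pars X' = a_pars X - {p}"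
    and ok: "comb_ok X' \<pi>n vo"
    and vars: "vars_of \<pi>n \<subseteq> vars_of \<pi>o"
    and hvn: "hyp_vars \<inter> vars_of \<pi>o \<subseteq> vars_of \<pi>n"
    and ivs: "\<And>x. IV x \<in> set \<pi>n \<Longrightarrow> IV x \<in> set \<pi>o \<or> x = Orig cc"
  shows "invariant X'"
proof (rule invariant_replace_combs[OF I C])
  show "{(\<pi>o, vo)} \<subseteq> a_combs X" using co by auto
  show "a_tens X' \<subseteq> a_tens X" "a_pars X' \<subseteq> a_pars X" using T P by auto
  show "comb_ok X' \<pi>n vo" by (rule ok)
  show "vars_of \<pi>n \<subseteq> (\<Union>(\<pi>, v)\<in>{(\<pi>o, vo)}. vars_of \<pi>)" using vars by auto
  show "hyp_vars \<inter> (\<Union>(\<pi>, v)\<in>{(\<pi>o, vo)}. vars_of \<pi>) \<subseteq> vars_of \<pi>n" using hvn by auto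
  show "set (comb_origs \<pi>n) \<inter> set (comb_origs \<pi>) = {}" if o: "(\<pi>, v') \<in> a_combs X - {(\<pi>o, vo)}" for \<pi> v'
  proof -
    have "set (comb_origs \<pi>n) \<subseteq> set (comb_origs \<pi>o) \<union> {cc}" using ivs by (auto simp: in_set_comb_origs_iff) (metis avtx.inject(1))
    moreover have "cc \<notin> set (comb_origs \<pi>)" using invariantD(5)[OF I p lp, of \<pi> v'] o by (auto simp: in_set_comb_origs_iff)
    ultimately show ?thesis using invariantD(4)[OF I co, of \<pi> v'] o by auto
  qed
  show "vo \<in> snd ` {(\<pi>o, vo)} \<or> vo \<notin> snd ` a_combs X" by auto
  show "IV w \<notin> set \<pi>n" if q: "q \<in> a_pars X'" "left_par_premiss q = Some w" for q w
  proof
    assume w: "IV w \<in> set \<pi>n"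
    have qX: "q \<in> a_pars X" "q \<noteq> p" using q P by auto
    from ivs[OF w] show False
    proof
      assume "IV w \<in> set \<pi>o" then show False using invariantD(5)[OF I qX(1) q(2) co] by blast
    next
      assume "w = Orig cc"
      then show False using aps0_left_par_premiss_unique[of q p w] invariantD(2)[OF I] qX p lp q(2) by auto
    qed
  qed
  show "(k, w1, w2, vo) \<notin> a_tens X'" for k w1 w2
    using invariantD(6)[OF I, of k w1 w2 vo] co T by force
  show "right_par_main q \<noteq> Some vo" if "q \<in> a_pars X'" for q
    using invariantD(7)[OF I, of q vo] co P that by force
qed

section \<open>The concatenation contractions\<close>

text \<open>Contraction \<open>[+]\<close> substitutes the derivation denoted by the comb \<open>b\<close> for the vertex \<open>nw\<close>:
  the plugging \<open>f\<close> of \<open>a1 @ b @ a2\<close> induces a plugging of \<open>a1 @ [nw] @ a2\<close>.\<close>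
lemma admissible_substitute:
  assumes adm: "admissible Z f (a1 @ b @ a2)"
    and D: "ND (open_hyps b + plug_ctx f b) (comb_str f b, lab nw)"
    and sort: "lsort (avsort lab) b = fsort (lab nw)"
    and fresh_nw: "nw \<notin> set (comb_origs a1)" "nw \<notin> set (comb_origs a2)"
    and dist: "distinct (comb_origs (a1 @ b @ a2))"
    and vars: "vars_of b \<inter> vars_of (a1 @ a2) = {}" "vars_of b \<inter> Z = {}"
    and whole: "whole_hyps b"
  shows "admissible Z (f(nw := (open_hyps b + plug_ctx f b, comb_str f b))) (a1 @ IV (Orig nw) # a2)"
    (is "admissible Z ?g _")
proof -
  have hyps: "cvars (open_hyps b) \<subseteq> vars_of b" by (rule cvars_open_hyps[OF whole])
  have ctx: "cvars (plug_ctx f b) \<inter> (vars_of (a1 @ b @ a2) \<union> Z) = {}"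
    using admissible_cvars[OF adm] by (fastforce simp: cvars_plug_ctx)
  have outer: "cvars (open_hyps b + plug_ctx f b) \<inter> cvars (fst (f m)) = {}"
    if m: "m \<in> set (comb_origs a1) \<or> m \<in> set (comb_origs a2)" for m
  proof -
    have "cvars (fst (f m)) \<inter> vars_of (a1 @ b @ a2) = {}" using admissible_cvars[OF adm, of m] m by auto
    moreover have "cvars (fst (f m')) \<inter> cvars (fst (f m)) = {}" if "m' \<in> set (comb_origs b)" for m'
      using admissible_disjoint[OF adm, of m' m] m that dist by auto
    ultimately show ?thesis using hyps by (auto simp: cvars_plug_ctx)
  qed
  show ?thesis
    unfolding admissible_def
  proof (intro conjI ballI impI)
    fix n assume n: "n \<in> set (comb_origs (a1 @ IV (Orig nw) # a2))"
    show "ND (fst (?g n)) (snd (?g n), lab n)" using n D admissible_ND[OF adm] by auto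
    show "ssort (snd (?g n)) = fsort (lab n)"
      using n sort admissible_ssort[OF adm, of b] adm by (auto simp: admissible_def)
    show "cvars (fst (?g n)) \<inter> (vars_of (a1 @ IV (Orig nw) # a2) \<union> Z) = {}"
      using n ctx hyps vars admissible_cvars[OF adm, of n] by (cases "n = nw") auto
  next
    fix n1 n2
    assume n: "n1 \<in> set (comb_origs (a1 @ IV (Orig nw) # a2))" "n2 \<in> set (comb_origs (a1 @ IV (Orig nw) # a2))"
      "n1 \<noteq> n2"
    then consider "n1 = nw" "n2 \<in> set (comb_origs a1) \<or> n2 \<in> set (comb_origs a2)"
      | "n2 = nw" "n1 \<in> set (comb_origs a1) \<or> n1 \<in> set (comb_origs a2)"
      | "n1 \<noteq> nw" "n2 \<noteq> nw" by auto
    then show "cvars (fst (?g n1)) \<inter> cvars (fst (?g n2)) = {}"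
    proof cases
      case 1 then show ?thesis using outer[of n2] n(3) by auto
    next
      case 2 then show ?thesis using outer[of n1] n(3) by auto
    next
      case 3 then show ?thesis using n admissible_disjoint[OF adm, of n1 n2] by auto
    qed
  qed
qed

lemma derivable_plus:
  assumes M1: "derivable Z (a1 @ IV (Orig nw) # a2) v" and M2: "derivable Z b (Orig nw)"
    and d1: "distinct (comb_origs (a1 @ IV (Orig nw) # a2))" and dn: "distinct (comb_origs (a1 @ b @ a2))"
    and vd: "vars_of b \<inter> vars_of (a1 @ a2) = {}" and vz: "vars_of b \<inter> Z = {}"
    and ob: "whole_hyps b" and o1: "whole_hyps (a1 @ IV (Orig nw) # a2)"
    and ls: "lsort (avsort lab) b = fsort (lab nw)"
  shows "derivable Z (a1 @ b @ a2) v"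
  unfolding derivable_def
proof (intro allI impI)
  fix f assume adm: "admissible Z f (a1 @ b @ a2)"
  let ?g = "f(nw := (open_hyps b + plug_ctx f b, comb_str f b))"
  have "admissible Z f b" by (rule admissible_mono[OF adm]) auto
  then have "ND (open_hyps b + plug_ctx f b) (comb_str f b, lab nw)" using M2 unfolding derivable_def by auto
  then have "admissible Z ?g (a1 @ IV (Orig nw) # a2)"
    by (rule admissible_substitute[OF adm _ ls _ _ dn vd vz ob]) (use d1 in auto)
  then have D: "ND (open_hyps (a1 @ IV (Orig nw) # a2) + plug_ctx ?g (a1 @ IV (Orig nw) # a2))
      (comb_str ?g (a1 @ IV (Orig nw) # a2), vertex_formula v)"
    using M1 unfolding derivable_def by blast
  have nw: "nw \<notin> set (comb_origs a1)" "nw \<notin> set (comb_origs a2)" using d1 by auto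
  have "comb_str ?g a1 = comb_str f a1" "comb_str ?g a2 = comb_str f a2"
    "plug_ctx ?g a1 = plug_ctx f a1" "plug_ctx ?g a2 = plug_ctx f a2"
    using nw by (auto intro!: comb_inst_cong plug_ctx_cong)
  moreover have "open_hyps (a1 @ b @ a2) = open_hyps (a1 @ IV (Orig nw) # a2) + open_hyps b"
    by (rule open_hyps_union) (use vd ob o1 in auto)
  ultimately show "ND (open_hyps (a1 @ b @ a2) + plug_ctx f (a1 @ b @ a2)) (comb_str f (a1 @ b @ a2), vertex_formula v)"
    using D by (simp add: ac_simps)
qed

text \<open>Both \<open>[+]\<close> and \<open>[\<times>k]\<close> merge a comb \<open>b\<close> into a position \<open>x\<close> of another comb.\<close>
lemma invariant_merge_combs:
  assumes I: "invariant X"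
    and c1: "(a1 @ x # a2, v1) \<in> a_combs X" and c2: "(b, v2) \<in> a_combs X" and ne: "v1 \<noteq> v2"
    and x: "item_vars exp_var x = []"
    and C: "a_combs X' = insert (a1 @ b @ a2, v) (a_combs X - {(a1 @ x # a2, v1), (b, v2)})"
    and T: "a_tens X' \<subseteq> a_tens X" and P: "a_pars X' = a_pars X"
    and concl: "v = v1 \<or> v \<notin> snd ` a_combs X"
    and tens: "\<And>k w1 w2. (k, w1, w2, v) \<notin> a_tens X'"
    and right: "\<And>p. p \<in> a_pars X \<Longrightarrow> right_par_main p \<noteq> Some v"
    and orig: "\<exists>m. v = Orig m" and sort: "lsort (avsort lab) (a1 @ b @ a2) = avsort lab v"
    and der: "\<And>Z. unused_vars X \<subseteq> Z \<Longrightarrow> vars_of b \<inter> Z = {} \<Longrightarrow> vars_of (a1 @ a2) \<inter> vars_of b = {}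
      \<Longrightarrow> set (comb_origs (a1 @ a2)) \<inter> set (comb_origs b) = {} \<Longrightarrow> derivable Z (a1 @ b @ a2) v"
  shows "invariant X'"
proof -
  let ?p = "a1 @ x # a2" and ?n = "a1 @ b @ a2"
  let ?R = "{(?p, v1), (b, v2)}"
  have R: "?R \<subseteq> a_combs X" using c1 c2 by auto
  have disj: "vars_of (a1 @ a2) \<inter> vars_of b = {}" "set (comb_origs ?p) \<inter> set (comb_origs b) = {}"
    using invariantD(4)[OF I c1 c2] ne x by auto
  have k1: "comb_ok X ?p v1" and k2: "comb_ok X b v2" using invariantD(3)[OF I] c1 c2 by auto
  have vars: "vars_of ?n = vars_of ?p \<union> vars_of b" using x by auto
  then have Z: "unused_vars X \<subseteq> unused_vars X'" by (intro unused_vars_mono[OF C R]) auto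
  have items: "set ?n \<subseteq> set ?p \<union> set b" by auto
  have ok: "comb_ok X' ?n v"
  proof (rule comb_okI)
    show "distinct (comb_vars exp_var ?n)" using comb_okD(2)[OF k1] comb_okD(2)[OF k2] disj(1) x by auto
    show "distinct (comb_origs ?n)" using comb_okD(3)[OF k1] comb_okD(3)[OF k2] disj(2) by auto
    show "\<And>q. ISym (SVar q) \<in> set ?n \<Longrightarrow> q \<in> hyp_vars" using comb_okD(5)[OF k1] comb_okD(5)[OF k2] by auto
    show "whole_hyps ?n" by (rule whole_hyps_union[OF vars comb_okD(6)[OF k1] comb_okD(6)[OF k2]])
    have "vars_of ?n \<inter> unused_vars X' = {}" using comb_vars_not_unused[of ?n v X'] C by simp
    then show "derivable (unused_vars X') ?n v" using der[OF Z] disj by auto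
  qed (use orig sort in auto)
  show ?thesis
  proof (rule invariant_replace_combs[OF I C R T _ ok])
    show "a_pars X' \<subseteq> a_pars X" using P by simp
    show "vars_of ?n \<subseteq> (\<Union>(\<pi>, v)\<in>?R. vars_of \<pi>)" "hyp_vars \<inter> (\<Union>(\<pi>, v)\<in>?R. vars_of \<pi>) \<subseteq> vars_of ?n"
      using vars by auto
    show "set (comb_origs ?n) \<inter> set (comb_origs \<pi>) = {}" if "(\<pi>, w) \<in> a_combs X - ?R" for \<pi> w
      using invariantD(4)[OF I c1, of \<pi> w] invariantD(4)[OF I c2, of \<pi> w] that by auto
    show "v \<in> snd ` ?R \<or> v \<notin> snd ` a_combs X" using concl by auto
    show "IV w \<notin> set ?n" if "p \<in> a_pars X'" "left_par_premiss p = Some w" for p w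
      using invariantD(5)[OF I, of p w] that c1 c2 P items by blast
  qed (use tens right P in auto)
qed

lemma invariant_plus_step:
  assumes I: "invariant X" and c1: "(a1 @ [IV w] @ a2, v) \<in> a_combs X" and c2: "(b, w) \<in> a_combs X"
    and wv: "w \<noteq> v"
  shows "invariant (X\<lparr>a_combs := insert (a1 @ b @ a2, v) (a_combs X - {(a1 @ [IV w] @ a2, v), (b, w)})\<rparr>)"
proof -
  have k1: "comb_ok X (a1 @ IV w # a2) v" and k2: "comb_ok X b w" using invariantD(3)[OF I] c1 c2 by auto
  obtain nw where nw: "w = Orig nw" using comb_okD(1)[OF k2] by blast
  show ?thesis
  proof (rule invariant_merge_combs[OF I _ c2 wv[symmetric]])
    show "(a1 @ IV w # a2, v) \<in> a_combs X" using c1 by simp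
    show "lsort (avsort lab) (a1 @ b @ a2) = avsort lab v" using comb_okD(4)[OF k1] comb_okD(4)[OF k2] by simp
    show "derivable Z (a1 @ b @ a2) v"
      if "unused_vars X \<subseteq> Z" "vars_of b \<inter> Z = {}" "vars_of (a1 @ a2) \<inter> vars_of b = {}"
        "set (comb_origs (a1 @ a2)) \<inter> set (comb_origs b) = {}" for Z
    proof (rule derivable_plus)
      show "derivable Z (a1 @ IV (Orig nw) # a2) v" "derivable Z b (Orig nw)"
        using derivable_mono[OF comb_okD(7)[OF k1] that(1)] derivable_mono[OF comb_okD(7)[OF k2] that(1)] nw
        by simp_all
      show "distinct (comb_origs (a1 @ IV (Orig nw) # a2))" using comb_okD(3)[OF k1] nw by simp
      then show "distinct (comb_origs (a1 @ b @ a2))" using comb_okD(3)[OF k2] that(4) by auto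
      show "whole_hyps b" "whole_hyps (a1 @ IV (Orig nw) # a2)" using comb_okD(6)[OF k2] comb_okD(6)[OF k1] nw by simp_all
      show "lsort (avsort lab) b = fsort (lab nw)" using comb_okD(4)[OF k2] nw by simp
    qed (use that in auto)
  qed (use nw invariantD(6,7)[OF I] c1 comb_okD(1)[OF k1] in force)+
qed

lemma derivable_times:
  assumes M1: "derivable Z (a1 @ ISym Sep # a2) (Orig a)" and M2: "derivable Z b (Orig bb)"
    and rel: "lab a = DUp k (lab cc) (lab bb) \<or> lab bb = DDown k (lab a) (lab cc) \<or> lab cc = DWrap k (lab a) (lab bb)"
    and sel: "sel_ok (avsort lab) k a1 a2"
    and vd: "vars_of (a1 @ a2) \<inter> vars_of b = {}"
    and od: "set (comb_origs (a1 @ a2)) \<inter> set (comb_origs b) = {}"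
    and o1: "whole_hyps (a1 @ ISym Sep # a2)" and ob: "whole_hyps b"
  shows "derivable Z (a1 @ b @ a2) (Orig cc)"
  unfolding derivable_def
proof (intro allI impI)
  let ?p = "a1 @ ISym Sep # a2"
  fix f assume adm: "admissible Z f (a1 @ b @ a2)"
  have D1: "ND (open_hyps ?p + plug_ctx f ?p) (comb_str f a1 @ Sep # comb_str f a2, lab a)"
    using derivableD[OF M1 adm] by auto
  have D2: "ND (open_hyps b + plug_ctx f b) (comb_str f b, lab bb)"
    using derivableD[OF M2 adm] by auto
  have dj: "cvars (open_hyps ?p + plug_ctx f ?p) \<inter> cvars (open_hyps b + plug_ctx f b) = {}"
    by (rule contexts_disjoint[OF adm _ _ _ _ o1 ob]) (use vd od in auto)
  have "ssort (comb_str f a1) = lsort (avsort lab) a1" "ssort (comb_str f a2) = lsort (avsort lab) a2"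
    by (rule admissible_ssort[OF adm]; auto)+
  then have "selects_sep k (ssort (comb_str f a1)) (ssort (comb_str f a2))"
    using sel by (simp add: sel_ok_iff_selects_sep)
  note sw = swrap_append_Sep(1)[OF this, of "comb_str f b"] swrap_append_Sep(2)[OF this]
  have "ND (open_hyps ?p + plug_ctx f ?p + (open_hyps b + plug_ctx f b)) (comb_str f (a1 @ b @ a2), lab cc)"
    using rel
  proof (elim disjE)
    assume r: "lab a = DUp k (lab cc) (lab bb)"
    show ?thesis using ND.upE[OF D1[unfolded r] D2 sw(2) dj] sw(1) by simp
  next
    assume r: "lab bb = DDown k (lab a) (lab cc)"
    show ?thesis using ND.downE[OF D1 D2[unfolded r] sw(2) dj] sw(1) by simp
  next
    assume r: "lab cc = DWrap k (lab a) (lab bb)"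
    show ?thesis using ND.wrapI[OF D1 D2 sw(2) dj] sw(1) r by simp
  qed
  moreover have "open_hyps (a1 @ b @ a2) = open_hyps ?p + open_hyps b"
    by (rule open_hyps_union) (use vd o1 ob in auto)
  ultimately show "ND (open_hyps (a1 @ b @ a2) + plug_ctx f (a1 @ b @ a2)) (comb_str f (a1 @ b @ a2), vertex_formula (Orig cc))"
    by (simp add: ac_simps)
qed

lemma invariant_times_step:
  assumes I: "invariant X" and t: "(k, v1, v2, v) \<in> a_tens X"
    and c1: "(a1 @ [ISym Sep] @ a2, v1) \<in> a_combs X" and c2: "(b, v2) \<in> a_combs X"
    and sel: "sel_ok (avsort lab) k a1 a2" and v12: "v1 \<noteq> v2"
  shows "invariant (X\<lparr>a_tens := a_tens X - {(k, v1, v2, v)},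
          a_combs := insert (a1 @ b @ a2, v) (a_combs X - {(a1 @ [ISym Sep] @ a2, v1), (b, v2)})\<rparr>)"
    (is "invariant ?X'")
proof -
  have k1: "comb_ok X (a1 @ ISym Sep # a2) v1" and k2: "comb_ok X b v2" using invariantD(3)[OF I] c1 c2 by auto
  have t0: "(k, v1, v2, v) \<in> a_tens aps0" using t invariantD(1)[OF I] by blast
  obtain r a bb cc where L: "(r, [a, bb], [cc]) \<in> links" "v1 = Orig a" "v2 = Orig bb" "v = Orig cc"
      "r = TLUp k \<and> lab a = DUp k (lab cc) (lab bb) \<or> r = TLDown k \<and> lab bb = DDown k (lab a) (lab cc)
       \<or> r = TRWrap k \<and> lab cc = DWrap k (lab a) (lab bb)"
    using aps0_tensor_cases[OF t0] by metis
  have "wf (lab a)" "wf (lab bb)" "wf (lab cc)" using link_vertex_in_V[OF L(1)] wf_lab by auto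
  moreover have "lsort (avsort lab) a1 + 1 + lsort (avsort lab) a2 = fsort (lab a)"
    "lsort (avsort lab) b = fsort (lab bb)"
    using comb_okD(4)[OF k1] comb_okD(4)[OF k2] L(2,3) by simp_all
  ultimately have sort: "lsort (avsort lab) (a1 @ b @ a2) = avsort lab v" using L(4,5) by auto
  show ?thesis
  proof (rule invariant_merge_combs[OF I _ c2 v12])
    show "(a1 @ ISym Sep # a2, v1) \<in> a_combs X" using c1 by simp
    show "(k', w1, w2, v) \<notin> a_tens ?X'" for k' w1 w2
    proof
      assume "(k', w1, w2, v) \<in> a_tens ?X'"
      then have "(k', w1, w2, v) \<in> a_tens aps0" "(k', w1, w2, v) \<noteq> (k, v1, v2, v)"
        using invariantD(1)[OF I] by auto
      then show False using aps0_tensor_concl_unique[OF _ t0] by auto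
    qed
    show "right_par_main p \<noteq> Some v" if "p \<in> a_pars X" for p
      using aps0_tensor_concl_not_right_par_main[OF t0, of p] that invariantD(2)[OF I] by auto
    show "derivable Z (a1 @ b @ a2) v"
      if "unused_vars X \<subseteq> Z" "vars_of b \<inter> Z = {}" "vars_of (a1 @ a2) \<inter> vars_of b = {}"
        "set (comb_origs (a1 @ a2)) \<inter> set (comb_origs b) = {}" for Z
    proof -
      have "derivable Z (a1 @ ISym Sep # a2) (Orig a)" "derivable Z b (Orig bb)"
        using derivable_mono[OF comb_okD(7)[OF k1] that(1)] derivable_mono[OF comb_okD(7)[OF k2] that(1)] L(2,3)
        by simp_all
      from derivable_times[OF this _ sel that(3,4) comb_okD(6)[OF k1] comb_okD(6)[OF k2]]
      show ?thesis using L(4,5) by blast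
    qed
    show "v = v1 \<or> v \<notin> snd ` a_combs X" using invariantD(6)[OF I t] by blast
  qed (use sort L(4) in simp_all)
qed

section \<open>The logical contractions\<close>

text \<open>The contractions \<open>[\<backslash>]\<close>, \<open>[/]\<close>, \<open>[\<up>k]\<close> and \<open>[\<down>k]\<close> remove the expansion of an auxiliary
  input \<open>a\<close> from a comb; the corresponding introduction rule withdraws \<open>aux_hyp a\<close>, which is
  fresh because its variables have become unused.\<close>
lemma derivable_withdraw_aux:
  assumes M: "derivable Z \<pi>o (Orig cc)" and aux: "a \<in> aux_vertices"
    and vars: "vars_of \<pi>o = judg_vars (aux_hyp a) \<union> vars_of \<pi>n" "judg_vars (aux_hyp a) \<inter> vars_of \<pi>n = {}"
    and origs: "comb_origs \<pi>o = comb_origs \<pi>n" and whole: "whole_hyps \<pi>o"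
    and unused: "judg_vars (aux_hyp a) \<subseteq> Z"
    and rule: "\<And>f \<Gamma>. admissible Z f \<pi>n \<Longrightarrow> ND (add_mset (fst (aux_hyp a), lab a) \<Gamma>) (comb_str f \<pi>o, lab cc)
      \<Longrightarrow> judg_vars (aux_hyp a) \<inter> cvars \<Gamma> = {} \<Longrightarrow> ND \<Gamma> (comb_str f \<pi>n, lab m)"
  shows "derivable Z \<pi>n (Orig m)"
  unfolding derivable_def
proof (intro allI impI)
  fix f assume adm: "admissible Z f \<pi>n"
  have whole_n: "whole_hyps \<pi>n" by (rule whole_hyps_remove_aux[OF aux whole vars])
  have "ND (open_hyps \<pi>o + plug_ctx f \<pi>o) (comb_str f \<pi>o, lab cc)"
    using derivableD[OF M adm] origs vars unused by auto
  moreover have "open_hyps \<pi>o = add_mset (aux_hyp a) (open_hyps \<pi>n)"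
    by (rule open_hyps_add_aux[OF aux whole_n vars])
  ultimately have "ND (add_mset (fst (aux_hyp a), lab a) (open_hyps \<pi>n + plug_ctx f \<pi>n)) (comb_str f \<pi>o, lab cc)"
    using origs aux_hyp_eq[of a] by (simp add: plug_ctx_def)
  moreover have "judg_vars (aux_hyp a) \<inter> cvars (open_hyps \<pi>n + plug_ctx f \<pi>n) = {}"
    using cvars_open_hyps[OF whole_n] cvars_plug_ctx_disjoint[OF adm] vars(2) unused by auto
  ultimately show "ND (open_hyps \<pi>n + plug_ctx f \<pi>n) (comb_str f \<pi>n, vertex_formula (Orig m))"
    using rule[OF adm] by simp
qed

lemma invariant_withdraw_aux_step:
  assumes I: "invariant X" and p: "p \<in> a_pars X" and main: "right_par_main p = Some (Orig m)"
    and c: "(\<pi>o, Orig cc) \<in> a_combs X" and aux: "a \<in> aux_vertices"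
    and vars: "vars_of \<pi>o = judg_vars (aux_hyp a) \<union> vars_of \<pi>n"
    and distinct_vars: "distinct (comb_vars exp_var \<pi>o)
      \<Longrightarrow> distinct (comb_vars exp_var \<pi>n) \<and> judg_vars (aux_hyp a) \<inter> vars_of \<pi>n = {}"
    and origs: "comb_origs \<pi>o = comb_origs \<pi>n" and items: "set \<pi>n \<subseteq> set \<pi>o \<union> {ISym Sep}"
    and sort: "lsort (avsort lab) \<pi>o = fsort (lab cc) \<Longrightarrow> lsort (avsort lab) \<pi>n = fsort (lab m)"
    and rule: "\<And>Z f \<Gamma>. admissible Z f \<pi>n \<Longrightarrow> ND (add_mset (fst (aux_hyp a), lab a) \<Gamma>) (comb_str f \<pi>o, lab cc)
      \<Longrightarrow> judg_vars (aux_hyp a) \<inter> cvars \<Gamma> = {} \<Longrightarrow> ND \<Gamma> (comb_str f \<pi>n, lab m)"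
  shows "invariant (X\<lparr>a_pars := a_pars X - {p}, a_combs := insert (\<pi>n, Orig m) (a_combs X - {(\<pi>o, Orig cc)})\<rparr>)"
    (is "invariant ?X'")
proof -
  have k: "comb_ok X \<pi>o (Orig cc)" using invariantD(3)[OF I c] .
  have dv: "distinct (comb_vars exp_var \<pi>n)" and dj: "judg_vars (aux_hyp a) \<inter> vars_of \<pi>n = {}"
    using distinct_vars comb_okD(2)[OF k] by auto
  have C: "a_combs ?X' = insert (\<pi>n, Orig m) (a_combs X - {(\<pi>o, Orig cc)})" by simp
  have Z: "unused_vars X \<subseteq> unused_vars ?X'" by (rule unused_vars_mono[OF C]) (use c vars in auto)
  have unused: "judg_vars (aux_hyp a) \<subseteq> unused_vars ?X'"
    by (rule aux_hyp_vars_unused[OF I c _ dj C]) (use vars in auto)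
  have ok: "comb_ok ?X' \<pi>n (Orig m)"
  proof (rule comb_okI)
    show "distinct (comb_vars exp_var \<pi>n)" by (rule dv)
    show "distinct (comb_origs \<pi>n)" using comb_okD(3)[OF k] origs by simp
    show "lsort (avsort lab) \<pi>n = avsort lab (Orig m)" using sort comb_okD(4)[OF k] by simp
    show "\<And>q. ISym (SVar q) \<in> set \<pi>n \<Longrightarrow> q \<in> hyp_vars" using comb_okD(5)[OF k] items by auto
    show "whole_hyps \<pi>n" by (rule whole_hyps_remove_aux[OF aux comb_okD(6)[OF k] vars dj])
    show "derivable (unused_vars ?X') \<pi>n (Orig m)"
      by (rule derivable_withdraw_aux[OF derivable_mono[OF comb_okD(7)[OF k] Z] aux vars dj origs
            comb_okD(6)[OF k] unused rule])
  qed simp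
  show ?thesis
  proof (rule invariant_right_par_step[OF I p main c C _ _ ok])
    show "hyp_vars \<inter> vars_of \<pi>o \<subseteq> vars_of \<pi>n" using vars hyp_vars_disjoint_aux_hyp[of a] by auto
    show "IV x \<in> set \<pi>o" if "IV x \<in> set \<pi>n" for x using that items by auto
  qed (use vars in auto)
qed

lemma invariant_under_step:
  assumes I: "invariant X" and p: "RUnderL v1 eA v \<in> a_pars X" and c: "(eA @ b, v1) \<in> a_combs X"
  shows "invariant (X\<lparr>a_pars := a_pars X - {RUnderL v1 eA v},
    a_combs := insert (b, v) (a_combs X - {(eA @ b, v1)})\<rparr>)"
proof -
  obtain cc a m where L: "v1 = Orig cc" "eA = expn a (fsort (lab a))" "v = Orig m"
      "(PRUnder, [cc], [a, m]) \<in> links" "lab m = DUnder (lab a) (lab cc)"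
    using subsetD[OF invariantD(2)[OF I] p] by (cases rule: aps0_par_cases) auto
  have wf: "wf (DUnder (lab a) (lab cc))" using link_vertex_in_V[OF L(4)] wf_lab L(5) by force
  show ?thesis unfolding L(1,3)
  proof (rule invariant_withdraw_aux_step[OF I _ _ _ aux_verticesI[OF L(4)]])
    show "RUnderL (Orig cc) eA (Orig m) \<in> a_pars X" "(eA @ b, Orig cc) \<in> a_combs X" using p c L by simp_all
    show "ND \<Gamma> (comb_str f b, lab m)"
      if "ND (add_mset (fst (aux_hyp a), lab a) \<Gamma>) (comb_str f (eA @ b), lab cc)"
        "judg_vars (aux_hyp a) \<inter> cvars \<Gamma> = {}" for f \<Gamma>
      using ND.underI[OF _ is_hyp_label_aux_hyp that(2) wf] that(1) L(2,5) by (simp add: comb_str_expn_aux)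
  qed (use L(2,5) comb_vars_expn_aux[of a] in auto)
qed

lemma invariant_over_step:
  assumes I: "invariant X" and p: "ROverL v1 v eB \<in> a_pars X" and c: "(b @ eB, v1) \<in> a_combs X"
  shows "invariant (X\<lparr>a_pars := a_pars X - {ROverL v1 v eB},
    a_combs := insert (b, v) (a_combs X - {(b @ eB, v1)})\<rparr>)"
proof -
  obtain cc bb m where L: "v1 = Orig cc" "eB = expn bb (fsort (lab bb))" "v = Orig m"
      "(PROver, [cc], [m, bb]) \<in> links" "lab m = DOver (lab cc) (lab bb)"
    using subsetD[OF invariantD(2)[OF I] p] by (cases rule: aps0_par_cases) auto
  have wf: "wf (DOver (lab cc) (lab bb))" using link_vertex_in_V[OF L(4)] wf_lab L(5) by force
  show ?thesis unfolding L(1,3)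
  proof (rule invariant_withdraw_aux_step[OF I _ _ _ aux_verticesI[OF L(4)]])
    show "ROverL (Orig cc) (Orig m) eB \<in> a_pars X" "(b @ eB, Orig cc) \<in> a_combs X" using p c L by simp_all
    show "ND \<Gamma> (comb_str f b, lab m)"
      if "ND (add_mset (fst (aux_hyp bb), lab bb) \<Gamma>) (comb_str f (b @ eB), lab cc)"
        "judg_vars (aux_hyp bb) \<inter> cvars \<Gamma> = {}" for f \<Gamma>
      using ND.overI[OF _ is_hyp_label_aux_hyp that(2) wf] that(1) L(2,5) by (simp add: comb_str_expn_aux)
  qed (use L(2,5) comb_vars_expn_aux[of bb] in auto)
qed

lemma invariant_up_step:
  assumes I: "invariant X" and p: "RUpL k v1 v eB \<in> a_pars X" and c: "(a1 @ eB @ a2, v1) \<in> a_combs X"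
    and sel: "sel_ok (avsort lab) k a1 a2"
  shows "invariant (X\<lparr>a_pars := a_pars X - {RUpL k v1 v eB},
    a_combs := insert (a1 @ [ISym Sep] @ a2, v) (a_combs X - {(a1 @ eB @ a2, v1)})\<rparr>)"
proof -
  obtain cc bb m where L: "v1 = Orig cc" "eB = expn bb (fsort (lab bb))" "v = Orig m"
      "(PRUp k, [cc], [m, bb]) \<in> links" "lab m = DUp k (lab cc) (lab bb)"
    using subsetD[OF invariantD(2)[OF I] p] by (cases rule: aps0_par_cases) auto
  have wf: "wf (DUp k (lab cc) (lab bb))" using link_vertex_in_V[OF L(4)] wf_lab L(5) by force
  show ?thesis unfolding L(1,3)
  proof (rule invariant_withdraw_aux_step[OF I _ _ _ aux_verticesI[OF L(4)]])
    show "RUpL k (Orig cc) (Orig m) eB \<in> a_pars X" "(a1 @ eB @ a2, Orig cc) \<in> a_combs X" using p c L by simp_all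
    show "ND \<Gamma> (comb_str f (a1 @ [ISym Sep] @ a2), lab m)"
      if adm: "admissible Z f (a1 @ [ISym Sep] @ a2)"
        and D: "ND (add_mset (fst (aux_hyp bb), lab bb) \<Gamma>) (comb_str f (a1 @ eB @ a2), lab cc)"
        and fresh: "judg_vars (aux_hyp bb) \<inter> cvars \<Gamma> = {}" for Z f \<Gamma>
    proof -
      have "ssort (comb_str f a1) = lsort (avsort lab) a1" "ssort (comb_str f a2) = lsort (avsort lab) a2"
        by (rule admissible_ssort[OF adm]; auto)+
      then have "selects_sep k (ssort (comb_str f a1)) (ssort (comb_str f a2))"
        using sel by (simp add: sel_ok_iff_selects_sep)
      note sw = swrap_append_Sep(1)[OF this, of "fst (aux_hyp bb)"] swrap_append_Sep(2)[OF this]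
      show ?thesis
        using ND.upI[OF _ sw(2) is_hyp_label_aux_hyp fresh wf] D sw(1) L(2,5) by (simp add: comb_str_expn_aux)
    qed
  qed (use L(2,5) comb_vars_expn_aux[of bb] in auto)
qed

lemma invariant_down_step:
  assumes I: "invariant X" and p: "RDownL k v1 eA v \<in> a_pars X" and e: "eA = e1 @ [ISym Sep] @ e2"
    and sel: "sel_ok (avsort lab) k e1 e2" and c: "(e1 @ b @ e2, v1) \<in> a_combs X"
  shows "invariant (X\<lparr>a_pars := a_pars X - {RDownL k v1 eA v},
    a_combs := insert (b, v) (a_combs X - {(e1 @ b @ e2, v1)})\<rparr>)"
proof -
  obtain cc a m where L: "v1 = Orig cc" "eA = expn a (fsort (lab a))" "v = Orig m"
      "(PRDown k, [cc], [a, m]) \<in> links" "lab m = DDown k (lab a) (lab cc)"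
    using subsetD[OF invariantD(2)[OF I] p] by (cases rule: aps0_par_cases) auto
  have wf: "wf (DDown k (lab a) (lab cc))" using link_vertex_in_V[OF L(4)] wf_lab L(5) by force
  have eA: "e1 @ ISym Sep # e2 = expn a (fsort (lab a))" using L(2) e by simp
  have "comb_origs (e1 @ ISym Sep # e2) = []" unfolding eA by (rule comb_origs_expn)
  then have no_origs: "comb_origs e1 = []" "comb_origs e2 = []" by simp_all
  have vars: "vars_of (e1 @ e2) = judg_vars (aux_hyp a)"
    using comb_vars_expn_aux[of a] eA[symmetric] by simp
  have sort: "lsort (avsort lab) e1 + 1 + lsort (avsort lab) e2 = fsort (lab a)"
    using lsort_expn[of lab a "fsort (lab a)"] eA[symmetric] by simp
  have str: "comb_str f e1 @ Sep # comb_str f e2 = fst (aux_hyp a)" for f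
    using comb_str_expn_aux[of f a] eA[symmetric] by simp
  show ?thesis unfolding L(1,3)
  proof (rule invariant_withdraw_aux_step[OF I _ _ _ aux_verticesI[OF L(4)]])
    show "RDownL k (Orig cc) eA (Orig m) \<in> a_pars X" "(e1 @ b @ e2, Orig cc) \<in> a_combs X" using p c L by simp_all
    show "ND \<Gamma> (comb_str f b, lab m)"
      if D: "ND (add_mset (fst (aux_hyp a), lab a) \<Gamma>) (comb_str f (e1 @ b @ e2), lab cc)"
        and fresh: "judg_vars (aux_hyp a) \<inter> cvars \<Gamma> = {}" for f \<Gamma>
    proof -
      have "selects_sep k (ssort (comb_str f e1)) (ssort (comb_str f e2))"
        using sel no_origs by (simp add: sel_ok_iff_selects_sep ssort_comb_inst)
      note sw = swrap_append_Sep(1)[OF this, of "comb_str f b"] swrap_append_Sep(2)[OF this]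
      show ?thesis
        using ND.downI[OF _ _ is_hyp_label_aux_hyp fresh wf] D sw str[of f] L(5) by simp
    qed
  qed (use sort vars no_origs L(5) in auto)
qed

text \<open>The contractions \<open>[\<bullet>]\<close> and \<open>[\<odot>k]\<close> replace the expansions of the two auxiliary inputs
  \<open>a\<close>, \<open>bb\<close> by the premiss \<open>cc\<close> of the par link; the corresponding elimination rule
  discharges \<open>aux_hyp a\<close> and \<open>aux_hyp bb\<close> against a derivation of \<open>cc\<close>.\<close>
lemma derivable_eliminate_aux:
  assumes M: "derivable Z (g1 @ mid @ g2) vo"
    and aux: "a \<in> aux_vertices" "bb \<in> aux_vertices" "a \<noteq> bb"
    and mid: "vars_of mid = judg_vars (aux_hyp a) \<union> judg_vars (aux_hyp bb)" "comb_origs mid = []"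
    and dv: "distinct (comb_vars exp_var (g1 @ mid @ g2))" and whole: "whole_hyps (g1 @ mid @ g2)"
    and dn: "distinct (comb_origs (g1 @ IV (Orig cc) # g2))"
    and unused: "judg_vars (aux_hyp a) \<subseteq> Z" "judg_vars (aux_hyp bb) \<subseteq> Z"
    and rule: "\<And>f \<Gamma> \<Delta> \<delta>. ND \<Delta> (\<delta>, lab cc) \<Longrightarrow>
        ND (\<Gamma> + {#(fst (aux_hyp a), lab a), (fst (aux_hyp bb), lab bb)#})
          (comb_str f g1 @ comb_str f mid @ comb_str f g2, vertex_formula vo) \<Longrightarrow>
        (judg_vars (aux_hyp a) \<union> judg_vars (aux_hyp bb)) \<inter> cvars \<Gamma> = {} \<Longrightarrow>
        cvars \<Gamma> \<inter> cvars \<Delta> = {} \<Longrightarrow> ND (\<Gamma> + \<Delta>) (comb_str f g1 @ \<delta> @ comb_str f g2, vertex_formula vo)"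
  shows "derivable Z (g1 @ IV (Orig cc) # g2) vo"
  unfolding derivable_def
proof (intro allI impI)
  let ?n = "g1 @ IV (Orig cc) # g2" and ?o = "g1 @ mid @ g2"
  let ?y = "g1 @ expn bb (fsort (lab bb)) @ g2"
  let ?A = "judg_vars (aux_hyp a)" and ?B = "judg_vars (aux_hyp bb)"
  fix f assume adm: "admissible Z f ?n"
  have disj: "?A \<inter> ?B = {}" "?A \<inter> vars_of ?n = {}" "?B \<inter> vars_of ?n = {}"
    using dv mid(1) aux_hyp_vars_disjoint[OF aux(3)] by auto
  have vars_y: "vars_of ?y = ?B \<union> vars_of ?n" using comb_vars_expn_aux[of bb] by auto
  have vars_o: "vars_of ?o = ?A \<union> vars_of ?y" using mid(1) vars_y by auto
  have dy: "?A \<inter> vars_of ?y = {}" using disj vars_y by auto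
  have whole_y: "whole_hyps ?y" by (rule whole_hyps_remove_aux[OF aux(1) whole vars_o dy])
  have whole_n: "whole_hyps ?n" by (rule whole_hyps_remove_aux[OF aux(2) whole_y vars_y disj(3)])
  have "open_hyps ?o = open_hyps ?n + {#aux_hyp a, aux_hyp bb#}"
    using open_hyps_add_aux[OF aux(1) whole_y vars_o dy] open_hyps_add_aux[OF aux(2) whole_n vars_y disj(3)]
    by simp
  moreover have "ND (open_hyps ?o + plug_ctx f ?o) (comb_str f ?o, vertex_formula vo)"
    by (rule derivableD[OF M adm]) (use mid unused in auto)
  ultimately have D: "ND (open_hyps ?n + plug_ctx f g1 + plug_ctx f g2
      + {#(fst (aux_hyp a), lab a), (fst (aux_hyp bb), lab bb)#})
      (comb_str f g1 @ comb_str f mid @ comb_str f g2, vertex_formula vo)"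
    using plug_ctx_no_origs[OF mid(2)] aux_hyp_eq[of a] aux_hyp_eq[of bb] by (simp add: ac_simps)
  have cc: "cc \<in> set (comb_origs ?n)" by simp
  have ctx: "cvars (plug_ctx f g1 + plug_ctx f g2) \<inter> (Z \<union> vars_of ?n) = {}"
    using admissible_cvars[OF adm] by (auto simp: cvars_plug_ctx)
  have "(?A \<union> ?B) \<inter> cvars (open_hyps ?n + plug_ctx f g1 + plug_ctx f g2) = {}"
    using cvars_open_hyps[OF whole_n] disj unused ctx by auto
  moreover have "cvars (open_hyps ?n + plug_ctx f g1 + plug_ctx f g2) \<inter> cvars (fst (f cc)) = {}"
  proof -
    have "cvars (fst (f m)) \<inter> cvars (fst (f cc)) = {}" if "m \<in> set (comb_origs g1) \<or> m \<in> set (comb_origs g2)" for m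
      using admissible_disjoint[OF adm, of m cc] that dn by auto
    then show ?thesis
      using admissible_cvars[OF adm cc] cvars_open_hyps[OF whole_n] by (auto simp: cvars_plug_ctx)
  qed
  ultimately have "ND (open_hyps ?n + plug_ctx f g1 + plug_ctx f g2 + fst (f cc))
      (comb_str f g1 @ snd (f cc) @ comb_str f g2, vertex_formula vo)"
    using rule[OF admissible_ND[OF adm cc] D] by blast
  then show "ND (open_hyps ?n + plug_ctx f ?n) (comb_str f ?n, vertex_formula vo)"
    by (simp add: ac_simps)
qed

lemma invariant_eliminate_aux_step:
  assumes I: "invariant X" and p: "p \<in> a_pars X" and lp: "left_par_premiss p = Some (Orig cc)"
    and c: "(g1 @ mid @ g2, vo) \<in> a_combs X"
    and aux: "a \<in> aux_vertices" "bb \<in> aux_vertices" "a \<noteq> bb"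
    and mid: "vars_of mid = judg_vars (aux_hyp a) \<union> judg_vars (aux_hyp bb)" "comb_origs mid = []"
      "lsort (avsort lab) mid = fsort (lab cc)"
    and rule: "\<And>f \<Gamma> \<Delta> \<delta>. ND \<Delta> (\<delta>, lab cc) \<Longrightarrow>
        ND (\<Gamma> + {#(fst (aux_hyp a), lab a), (fst (aux_hyp bb), lab bb)#})
          (comb_str f g1 @ comb_str f mid @ comb_str f g2, vertex_formula vo) \<Longrightarrow>
        (judg_vars (aux_hyp a) \<union> judg_vars (aux_hyp bb)) \<inter> cvars \<Gamma> = {} \<Longrightarrow>
        cvars \<Gamma> \<inter> cvars \<Delta> = {} \<Longrightarrow> ND (\<Gamma> + \<Delta>) (comb_str f g1 @ \<delta> @ comb_str f g2, vertex_formula vo)"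
  shows "invariant (X\<lparr>a_pars := a_pars X - {p},
          a_combs := insert (g1 @ [IV (Orig cc)] @ g2, vo) (a_combs X - {(g1 @ mid @ g2, vo)})\<rparr>)"
    (is "invariant ?X'")
proof -
  let ?n = "g1 @ IV (Orig cc) # g2" and ?o = "g1 @ mid @ g2"
  let ?A = "judg_vars (aux_hyp a)" and ?B = "judg_vars (aux_hyp bb)"
  have k: "comb_ok X ?o vo" using invariantD(3)[OF I c] .
  have dv: "distinct (comb_vars exp_var ?o)" using comb_okD(2)[OF k] .
  have disj: "?A \<inter> ?B = {}" "?A \<inter> vars_of ?n = {}" "?B \<inter> vars_of ?n = {}"
    using dv mid(1) aux_hyp_vars_disjoint[OF aux(3)] by auto
  have vars_o: "vars_of ?o = ?A \<union> (?B \<union> vars_of ?n)" using mid(1) by auto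
  have whole_n: "whole_hyps ?n"
  proof (rule whole_hyps_remove_aux[OF aux(2) _ _ disj(3)])
    show "vars_of (g1 @ expn bb (fsort (lab bb)) @ g2) = ?B \<union> vars_of ?n"
      using comb_vars_expn_aux[of bb] by auto
    then show "whole_hyps (g1 @ expn bb (fsort (lab bb)) @ g2)"
      by (intro whole_hyps_remove_aux[OF aux(1) comb_okD(6)[OF k]]) (use vars_o disj in auto)
  qed
  have C: "a_combs ?X' = insert (?n, vo) (a_combs X - {(?o, vo)})" by simp
  have Z: "unused_vars X \<subseteq> unused_vars ?X'" by (rule unused_vars_mono[OF C]) (use c mid in auto)
  have unused: "?A \<subseteq> unused_vars ?X'" "?B \<subseteq> unused_vars ?X'"
    by (rule aux_hyp_vars_unused[OF I c _ _ C]; use vars_o disj in auto)+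
  have "cc \<notin> set (comb_origs ?o)" using invariantD(5)[OF I p lp c] by (simp add: in_set_comb_origs_iff)
  then have dn: "distinct (comb_origs ?n)" using comb_okD(3)[OF k] mid(2) by auto
  have ok: "comb_ok ?X' ?n vo"
  proof (rule comb_okI)
    show "lsort (avsort lab) ?n = avsort lab vo" using comb_okD(4)[OF k] mid(3) by simp
    show "\<And>q. ISym (SVar q) \<in> set ?n \<Longrightarrow> q \<in> hyp_vars" using comb_okD(5)[OF k] by auto
    show "derivable (unused_vars ?X') ?n vo"
      by (rule derivable_eliminate_aux[OF derivable_mono[OF comb_okD(7)[OF k] Z] aux mid(1,2) dv
            comb_okD(6)[OF k] dn unused rule])
  qed (use comb_okD(1)[OF k] dv dn whole_n in auto)
  show ?thesis
  proof (rule invariant_left_par_step[OF I p lp c _ _ _ ok])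
    show "hyp_vars \<inter> vars_of ?o \<subseteq> vars_of ?n"
      using vars_o hyp_vars_disjoint_aux_hyp[of a] hyp_vars_disjoint_aux_hyp[of bb] by auto
  qed auto
qed

lemma invariant_prod_step:
  assumes I: "invariant X" and p: "LProdL v1 eA eB \<in> a_pars X" and c: "(g1 @ eA @ eB @ g2, v2) \<in> a_combs X"
  shows "invariant (X\<lparr>a_pars := a_pars X - {LProdL v1 eA eB},
          a_combs := insert (g1 @ [IV v1] @ g2, v2) (a_combs X - {(g1 @ eA @ eB @ g2, v2)})\<rparr>)"
proof -
  obtain cc a bb where L: "v1 = Orig cc" "eA = expn a (fsort (lab a))" "eB = expn bb (fsort (lab bb))"
      "(PLProd, [cc], [a, bb]) \<in> links" "lab cc = DProd (lab a) (lab bb)"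
    using subsetD[OF invariantD(2)[OF I] p] by (cases rule: aps0_par_cases) auto
  have "a \<noteq> bb" using link_wellformed[OF L(4)] by auto
  have "invariant (X\<lparr>a_pars := a_pars X - {LProdL v1 eA eB},
      a_combs := insert (g1 @ [IV (Orig cc)] @ g2, v2) (a_combs X - {(g1 @ (eA @ eB) @ g2, v2)})\<rparr>)"
  proof (rule invariant_eliminate_aux_step[OF I p _ _ aux_verticesI[OF L(4)] aux_verticesI[OF L(4)] \<open>a \<noteq> bb\<close>])
    show "ND (\<Gamma> + \<Delta>) (comb_str f g1 @ \<delta> @ comb_str f g2, vertex_formula v2)"
      if "ND \<Delta> (\<delta>, lab cc)"
        "ND (\<Gamma> + {#(fst (aux_hyp a), lab a), (fst (aux_hyp bb), lab bb)#})
          (comb_str f g1 @ comb_str f (eA @ eB) @ comb_str f g2, vertex_formula v2)"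
        "(judg_vars (aux_hyp a) \<union> judg_vars (aux_hyp bb)) \<inter> cvars \<Gamma> = {}" "cvars \<Gamma> \<inter> cvars \<Delta> = {}"
      for f \<Gamma> \<Delta> \<delta>
      using ND.prodE[OF that(1)[unfolded L(5)] _ is_hyp_label_aux_hyp is_hyp_label_aux_hyp _ that(3,4)]
        that(2) aux_hyp_vars_disjoint[OF \<open>a \<noteq> bb\<close>] L(2,3) by (simp add: comb_str_expn_aux)
  qed (use c L comb_vars_expn_aux in auto)
  then show ?thesis using L(1) by simp
qed

lemma invariant_wrap_step:
  assumes I: "invariant X" and p: "LWrapL k v1 eA eB \<in> a_pars X" and e: "eA = e1 @ [ISym Sep] @ e2"
    and sel: "sel_ok (avsort lab) k e1 e2" and c: "(g1 @ e1 @ eB @ e2 @ g2, v2) \<in> a_combs X"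
  shows "invariant (X\<lparr>a_pars := a_pars X - {LWrapL k v1 eA eB},
          a_combs := insert (g1 @ [IV v1] @ g2, v2) (a_combs X - {(g1 @ e1 @ eB @ e2 @ g2, v2)})\<rparr>)"
proof -
  obtain cc a bb where L: "v1 = Orig cc" "eA = expn a (fsort (lab a))" "eB = expn bb (fsort (lab bb))"
      "(PLWrap k, [cc], [a, bb]) \<in> links" "lab cc = DWrap k (lab a) (lab bb)"
    using subsetD[OF invariantD(2)[OF I] p] by (cases rule: aps0_par_cases) auto
  have "a \<noteq> bb" using link_wellformed[OF L(4)] by auto
  have eA: "e1 @ ISym Sep # e2 = expn a (fsort (lab a))" using L(2) e by simp
  have "comb_origs (e1 @ ISym Sep # e2) = []" unfolding eA by (rule comb_origs_expn)
  then have no_origs: "comb_origs e1 = []" "comb_origs e2 = []" by simp_all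
  have vars: "vars_of (e1 @ e2) = judg_vars (aux_hyp a)"
    using comb_vars_expn_aux[of a] eA[symmetric] by simp
  have sort: "lsort (avsort lab) e1 + 1 + lsort (avsort lab) e2 = fsort (lab a)"
    using lsort_expn[of lab a "fsort (lab a)"] eA[symmetric] by simp
  have sw: "swrap k (fst (aux_hyp a)) (fst (aux_hyp bb)) = comb_str f (e1 @ eB @ e2)"
    "wrap_defined k (fst (aux_hyp a))" for f
  proof -
    have "selects_sep k (ssort (comb_str f e1)) (ssort (comb_str f e2))"
      using sel no_origs by (simp add: sel_ok_iff_selects_sep ssort_comb_inst)
    moreover have "comb_str f e1 @ Sep # comb_str f e2 = fst (aux_hyp a)"
      using comb_str_expn_aux[of f a] eA[symmetric] by simp
    ultimately show "swrap k (fst (aux_hyp a)) (fst (aux_hyp bb)) = comb_str f (e1 @ eB @ e2)"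
      "wrap_defined k (fst (aux_hyp a))"
      using swrap_append_Sep[of k "comb_str f e1" "comb_str f e2"] L(3) comb_str_expn_aux[of f bb] by auto
  qed
  have "invariant (X\<lparr>a_pars := a_pars X - {LWrapL k v1 eA eB},
      a_combs := insert (g1 @ [IV (Orig cc)] @ g2, v2) (a_combs X - {(g1 @ (e1 @ eB @ e2) @ g2, v2)})\<rparr>)"
  proof (rule invariant_eliminate_aux_step[OF I p _ _ aux_verticesI[OF L(4)] aux_verticesI[OF L(4)] \<open>a \<noteq> bb\<close>])
    show "ND (\<Gamma> + \<Delta>) (comb_str f g1 @ \<delta> @ comb_str f g2, vertex_formula v2)"
      if "ND \<Delta> (\<delta>, lab cc)"
        "ND (\<Gamma> + {#(fst (aux_hyp a), lab a), (fst (aux_hyp bb), lab bb)#})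
          (comb_str f g1 @ comb_str f (e1 @ eB @ e2) @ comb_str f g2, vertex_formula v2)"
        "(judg_vars (aux_hyp a) \<union> judg_vars (aux_hyp bb)) \<inter> cvars \<Gamma> = {}" "cvars \<Gamma> \<inter> cvars \<Delta> = {}"
      for f \<Gamma> \<Delta> \<delta>
      using ND.wrapE[OF that(1)[unfolded L(5)] _ sw(2) is_hyp_label_aux_hyp is_hyp_label_aux_hyp _ that(3,4)]
        that(2) sw(1)[of f] aux_hyp_vars_disjoint[OF \<open>a \<noteq> bb\<close>] by simp
  qed (use c L vars sort no_origs comb_vars_expn_aux[of bb] in auto)
  then show ?thesis using L(1) by simp
qed

lemma invariant_step:
  assumes "contract (avsort lab) X Y" and I: "invariant X"
  shows "invariant Y"
  using assms(1)
proof (cases rule: contract.cases)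
  case plus then show ?thesis using invariant_plus_step[OF I] by simp
next
  case times then show ?thesis using invariant_times_step[OF I] by simp
next
  case under then show ?thesis using invariant_under_step[OF I] by simp
next
  case over then show ?thesis using invariant_over_step[OF I] by simp
next
  case up then show ?thesis using invariant_up_step[OF I] by simp
next
  case down then show ?thesis using invariant_down_step[OF I] by simp
next
  case prod then show ?thesis using invariant_prod_step[OF I] by simp
next
  case wrap then show ?thesis using invariant_wrap_step[OF I] by simp
qed

lemma invariant_reachable: "(contract (avsort lab))\<^sup>*\<^sup>* aps0 Y \<Longrightarrow> invariant Y"
  by (induction rule: rtranclp_induct) (auto intro: invariant_aps0 invariant_step)

text \<open>In a single comb all hypothesis variables occur, and no expansion variable does.\<close>
lemma open_hyps_single_comb:
  assumes I: "invariant \<lparr>a_combs = {(map ISym \<gamma>, Orig c)}, a_tens = {}, a_pars = {}\<rparr>" (is "invariant ?X")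
  shows "open_hyps (map ISym \<gamma>) = mset (map (\<lambda>h. (hl h, lab h)) hs)"
proof -
  have k: "comb_ok ?X (map ISym \<gamma>) (Orig c)" using invariantD(3)[OF I] by simp
  have covered: "hyp_vars \<subseteq> set (svars \<gamma>)" using invariantD(8)[OF I] by simp
  have "set (svars \<gamma>) \<subseteq> hyp_vars"
    using comb_okD(5)[OF k] by (auto simp: ISym_SVar_in_map_iff[symmetric])
  have "\<not> touches (aux_hyp u) (map ISym \<gamma>)" for u
    using hyp_vars_disjoint_aux_hyp[of u] \<open>set (svars \<gamma>) \<subseteq> hyp_vars\<close> by (auto simp: touches_def)
  moreover have "touches (hl h, lab h) (map ISym \<gamma>)" if h: "h \<in> set hs" for h
  proof -
    obtain x where "x \<in> set (svars (hl h))" using hyp_label_props[OF h] by (cases "svars (hl h)") auto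
    then show ?thesis using h covered by (auto simp: touches_def hyp_vars_def)
  qed
  ultimately have "{j \<in> all_hyps. touches j (map ISym \<gamma>)} = hyp_judgs"
    by (auto simp: all_hyps_def hyp_judgs_def)
  moreover have "inj_on (\<lambda>h. (hl h, lab h)) (set hs)"
    using hyp_labels_disjoint hyp_label_props by (fastforce intro: inj_onI)
  then have "distinct (map (\<lambda>h. (hl h, lab h)) hs)" using distinct_hs by (simp add: distinct_map)
  ultimately show ?thesis
    unfolding open_hyps_def hyp_judgs_def by (metis list.set_map mset_set_set)
qed

lemma single_comb_ND:
  assumes "invariant \<lparr>a_combs = {(map ISym \<gamma>, Orig c)}, a_tens = {}, a_pars = {}\<rparr>" (is "invariant ?X")
  shows "ND (mset (map (\<lambda>h. (hl h, lab h)) hs)) (\<gamma>, lab c)"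
proof -
  let ?f = "\<lambda>_. ({#}, [])"
  have "admissible (unused_vars ?X) ?f (map ISym \<gamma>)" by (simp add: admissible_def)
  then have "ND (open_hyps (map ISym \<gamma>) + plug_ctx ?f (map ISym \<gamma>)) (comb_str ?f (map ISym \<gamma>), lab c)"
    using comb_okD(7)[OF invariantD(3)[OF assms]] unfolding derivable_def by fastforce
  then show ?thesis using open_hyps_single_comb[OF assms] by (simp add: plug_ctx_no_origs)
qed

end

theorem lemma2:
  fixes V :: "nat set" and lab :: "nat \<Rightarrow> formula" and links :: "link set"
    and hs :: "nat list" and hl :: "nat \<Rightarrow> str" and c :: nat and \<gamma> :: str
  assumes "proof_structure V lab links"
    and "distinct hs" and "set hs = ps_hyps V links"
    and "ps_concls V links = {c}"
    and "\<forall>h\<in>set hs. is_hyp_label (hl h) (fsort (lab h))"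
    and "distinct (concat (map (\<lambda>h. svars (hl h)) hs))"
    and "(contract (avsort lab))\<^sup>*\<^sup>* (aps_of V lab links hl)
           \<lparr> a_combs = {(map ISym \<gamma>, Orig c)}, a_tens = {}, a_pars = {} \<rparr>"
  shows "ND (mset (map (\<lambda>h. (hl h, lab h)) hs)) (\<gamma>, lab c)"
proof -
  interpret labelled_proof_structure V lab links hs hl
    using assms by unfold_locales auto
  show ?thesis using single_comb_ND invariant_reachable assms(7) by blast
qed
end
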